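(* Let $0<\varepsilon<\tfrac12$ and let $A\ge1$. For $x$ large, integers $h$ with $(\log x)^\varepsilon\le2^h\le(\log x)^{1-\varepsilon}$, $y:=\exp(2^h)$, and integers $k$ with $A^{-1}\log\log x\le k\le A\log\log x$, we have $$\mathbb E_y(\chi_k)\asymp\frac{(h\log2)^k}{2^h\,k!}.$$ In particular, with $\xi:=\sqrt{\log\log x}$ and $\mathfrak b:=1/(\log4-1)$, for every integer $t$ with $|t-h/\mathfrak b|\le\xi$, $$\mathbb E_y(\chi_{h+t})\asymp\frac1{2^t\xi}.$$ The implied constants depend at most on $\varepsilon$ and $A$.
   Context: $E$ is the set of squarefree positive integers; $\omega(n)$ is the number of distinct prime factors of $n$; $\chi_k$ is the indicator function of $\{n\in E:\omega(n)=k\}$. For $y\ge2$, $\mathbb P_y$ is the probability measure on squarefree integers all of whose prime factors are $<y$, with $\mathbb P_y(\{n\})=\frac1n\prod_{p<y}(1+1/p)^{-1}$, and $\mathbb E_y$ the corresponding expectation. *)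

theory Defs
  imports "HOL-Analysis.Analysis" "HOL-Computational_Algebra.Squarefree"
begin

definition sqf_smooth :: "real \<Rightarrow> nat set" where
  "sqf_smooth y = {n. n > 0 \<and> squarefree n \<and> (\<forall>p\<in>prime_factors n. real p < y)}"

text \<open>E_y(f) = sum over n of f(n) P_y({n}), with P_y({n}) = (1/n) prod_{p<y} (1+1/p)^(-1).\<close>
definition Ey :: "real \<Rightarrow> (nat \<Rightarrow> real) \<Rightarrow> real" where
  "Ey y f = (\<Sum>n\<in>sqf_smooth y. f n / real n) /
            (\<Prod>p\<in>{p::nat. prime p \<and> real p < y}. 1 + 1 / real p)"

definition chi :: "nat \<Rightarrow> nat \<Rightarrow> real" where
  "chi k n = (if squarefree n \<and> n > 0 \<and> card (prime_factors n) = k then 1 else 0)"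

end

theory Submission
  imports Defs "HOL-Number_Theory.Prime_Powers"
begin

text \<open>
  Summing over the squarefree $n = \prod T$ with $T$ a set of primes below $y$ gives
  $\mathbb{E}_y(\chi_k) = e_k(1/p : p < y) \big/ \prod_{p<y}(1 + 1/p)$, where $e_k$ is the elementary
  symmetric sum. By Mertens' second theorem (which follows from Chebyshev's bound by partial summation)
  $S = \sum_{p<y} 1/p = \ln\ln y + O(1)$ and the denominator is $\asymp \ln y$. Moreover
  $S^k - \binom{k}{2} Q S^{k-2} \le k!\,e_k \le S^k$ with $Q = \sum 1/p^2$; discarding the primes
  below a constant makes $Q$ small enough, and for $k \le B \ln\ln y$ the factors
  $(1 \pm O(1)/\ln\ln y)^k$ stay bounded, so $\mathbb{E}_y(\chi_k) \asymp (\ln\ln y)^k/(k!\,\ln y)$.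
  For $y = \exp(2^h)$ and $k = h + t$ near $2 h \ln 2$, a crude Stirling formula
  $k! \asymp \sqrt{k}\,(k/e)^k$ turns $(h\ln 2)^k/(2^h k!)$ into $\asymp 1/(2^t \sqrt{k})$.
\<close>

lemma ln_add_one_ge_quadratic:
  fixes u :: real assumes "0 \<le> u" shows "u - u^2/2 \<le> ln (1 + u)"
proof -
  let ?f = "\<lambda>u::real. ln (1 + u) - (u - u^2/2)"
  have "?f 0 \<le> ?f u"
  proof (rule DERIV_nonneg_imp_nondecreasing[OF assms])
    fix x :: real assume x: "0 \<le> x" "x \<le> u"
    have "DERIV ?f x :> (1/(1+x) - (1 - x))"
      using x by (auto intro!: derivative_eq_intros simp: power2_eq_square)
    moreover have "1/(1+x) - (1 - x) \<ge> 0" using x by (simp add: field_simps power2_eq_square)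
    ultimately show "\<exists>y. DERIV ?f x :> y \<and> 0 \<le> y" by blast
  qed
  thus ?thesis by simp
qed

lemma ln_add_one_le_cubic:
  fixes u :: real assumes "0 \<le> u" shows "ln (1 + u) \<le> u - u^2/2 + u^3/3"
proof -
  let ?f = "\<lambda>u::real. (u - u^2/2 + u^3/3) - ln (1 + u)"
  have "?f 0 \<le> ?f u"
  proof (rule DERIV_nonneg_imp_nondecreasing[OF assms])
    fix x :: real assume x: "0 \<le> x" "x \<le> u"
    have "DERIV ?f x :> ((1 - x + x^2) - 1/(1+x))"
      using x by (auto intro!: derivative_eq_intros simp: power2_eq_square)
    moreover have "(1 - x + x^2) - 1/(1+x) \<ge> 0" using x
      by (simp add: field_simps power2_eq_square)
    ultimately show "\<exists>y. DERIV ?f x :> y \<and> 0 \<le> y" by blast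
  qed
  thus ?thesis by simp
qed

lemma ln_one_minus_bounds:
  fixes v :: real assumes "\<bar>v\<bar> \<le> 1/2"
  shows "- v - 2 * v^2 \<le> ln (1 - v)" "ln (1 - v) \<le> - v"
proof -
  show "ln (1 - v) \<le> - v" using ln_add_one_self_le_self2[of "-v"] assms by simp
  show "- v - 2 * v^2 \<le> ln (1 - v)"
  proof (cases "v \<ge> 0")
    case True
    then show ?thesis using ln_one_minus_pos_lower_bound[of v] assms by simp
  next
    case False
    then have "(-v) - (-v)^2 \<le> ln (1 + (-v))" using assms by (intro ln_one_plus_pos_lower_bound) auto
    then have "- v - v^2 \<le> ln (1 - v)" by simp
    then show ?thesis using zero_le_power2[of v] by linarith
  qed
qed

lemma one_plus_power_le_exp:
  fixes a :: real assumes "a \<ge> 0" shows "(1 + a) ^ k \<le> exp (real k * a)"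
proof -
  have "(1 + a) ^ k \<le> exp a ^ k" using assms by (intro power_mono) auto
  thus ?thesis by (simp add: exp_of_nat_mult[symmetric])
qed

lemma exp_le_one_minus_power:
  fixes a :: real assumes "0 \<le> a" "a \<le> 1/2" shows "exp (- 2 * real k * a) \<le> (1 - a) ^ k"
proof -
  have "a^2 \<le> a / 2" using assms mult_left_mono[of a "1/2" a] by (simp add: power2_eq_square)
  then have "- 2 * a \<le> ln (1 - a)" using ln_one_minus_pos_lower_bound[OF assms] by linarith
  then have "exp (- 2 * a) \<le> exp (ln (1 - a))" by simp
  also have "\<dots> = 1 - a" using assms by simp
  finally have "exp (- 2 * a) ^ k \<le> (1 - a) ^ k" by (intro power_mono) auto
  thus ?thesis by (simp add: exp_of_nat_mult[symmetric] mult_ac)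
qed

lemma sum_atLeastLessThan_telescope:
  "m \<le> n \<Longrightarrow> (\<Sum>i\<in>{m..<n}. f i - f (Suc i)) = f m - (f n :: 'a :: ab_group_add)"
  by (induction n rule: dec_induct) (simp_all add: algebra_simps)

lemma sum_inverse_squares_le:
  assumes "a \<ge> 2" "S \<subseteq> {a..<N}"
  shows "(\<Sum>d\<in>S. 1 / real d ^ 2) \<le> 1 / (real a - 1)"
proof -
  let ?g = "\<lambda>d::nat. 1 / (real d - 1)"
  have "(\<Sum>d\<in>S. 1 / real d ^ 2) \<le> (\<Sum>d\<in>{a..<N}. 1 / real d ^ 2)"
    using assms by (intro sum_mono2) auto
  also have "\<dots> \<le> (\<Sum>d\<in>{a..<N}. ?g d - ?g (Suc d))"
  proof (rule sum_mono)
    fix d assume "d \<in> {a..<N}"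
    hence d: "real d \<ge> 2" using assms by auto
    have "?g d - ?g (Suc d) = 1 / (real d * (real d - 1))" using d by (simp add: field_simps)
    moreover have "real d * (real d - 1) \<le> real d ^ 2" using d by (simp add: power2_eq_square algebra_simps)
    moreover have "real d * (real d - 1) > 0" using d by simp
    ultimately show "1 / real d ^ 2 \<le> ?g d - ?g (Suc d)" by (simp add: frac_le)
  qed
  also have "\<dots> \<le> ?g a"
  proof (cases "a \<le> N")
    case True
    then show ?thesis using sum_atLeastLessThan_telescope[of a N ?g] assms by simp
  qed simp
  finally show ?thesis .
qed

section \<open>A crude Stirling formula\<close>

definition stirling_remainder :: "nat \<Rightarrow> real" where
  "stirling_remainder k = ln (fact k) - (real k + 1/2) * ln (real k) + real k"

lemma stirling_remainder_step:
  assumes "k \<ge> 1"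
  shows "\<bar>stirling_remainder k - stirling_remainder (Suc k)\<bar> \<le> 1/(2*real k) - 1/(2*real (Suc k))"
proof -
  define u where "u = 1 / real k"
  have u: "0 < u" "u \<le> 1" using assms by (auto simp: u_def)
  have "ln (fact (Suc k)) = ln (real (Suc k)) + ln (fact k)"
    by (simp add: ln_mult del: of_nat_Suc)
  hence "stirling_remainder k - stirling_remainder (Suc k) =
         (real k + 1/2) * (ln (real (Suc k)) - ln (real k)) - 1"
    unfolding stirling_remainder_def by (simp add: algebra_simps)
  also have "ln (real (Suc k)) - ln (real k) = ln (1 + u)"
    using assms by (simp add: u_def ln_div field_simps del: of_nat_Suc)
  also have "real k + 1/2 = 1/u + 1/2" by (simp add: u_def)
  finally have diff: "stirling_remainder k - stirling_remainder (Suc k) = (1/u + 1/2) * ln (1 + u) - 1" .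
  have "(1/u + 1/2) * (u - u^2/2) \<le> (1/u + 1/2) * ln (1 + u)"
    using ln_add_one_ge_quadratic[of u] u by (intro mult_left_mono) auto
  moreover have "(1/u + 1/2) * (u - u^2/2) = 1 - u^2/4"
    using u by (simp add: field_simps power2_eq_square)
  ultimately have lower: "- (u^2/4) \<le> (1/u + 1/2) * ln (1 + u) - 1" by simp
  have "(1/u + 1/2) * ln (1 + u) \<le> (1/u + 1/2) * (u - u^2/2 + u^3/3)"
    using ln_add_one_le_cubic[of u] u by (intro mult_left_mono) auto
  also have "\<dots> = 1 + u^2/12 + u^3/6"
    using u by (simp add: field_simps power2_eq_square power3_eq_cube)
  also have "\<dots> \<le> 1 + u^2/4"
  proof -
    have "u^3 \<le> u^2" using u by (simp add: power2_eq_square power3_eq_cube mult_left_le_one_le)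
    then show ?thesis by simp
  qed
  finally have upper: "(1/u + 1/2) * ln (1 + u) - 1 \<le> u^2/4" by linarith
  have "u^2/4 = 1 / (4 * real k * real k)" by (simp add: u_def power2_eq_square)
  also have "\<dots> \<le> 1 / (2 * real k * (real k + 1))"
    using assms by (intro divide_left_mono mult_pos_pos) (auto simp: algebra_simps)
  also have "\<dots> = 1/(2*real k) - 1/(2*real (Suc k))"
    using assms by (simp add: field_simps)
  finally have "u^2/4 \<le> 1/(2*real k) - 1/(2*real (Suc k))" .
  then show ?thesis unfolding diff abs_le_iff using lower upper by linarith
qed

lemma stirling_remainder_bounds:
  assumes "k \<ge> 1" shows "1/2 \<le> stirling_remainder k" "stirling_remainder k \<le> 3/2"
proof -
  have "\<bar>stirling_remainder k - 1\<bar> \<le> 1/2 - 1/(2*real k)"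
    using assms
  proof (induction k rule: dec_induct)
    case base then show ?case by (simp add: stirling_remainder_def)
  next
    case (step n)
    with stirling_remainder_step[OF step.hyps(1)] show ?case unfolding abs_le_iff by linarith
  qed
  moreover have "0 \<le> 1/(2*real k)" by simp
  ultimately show "1/2 \<le> stirling_remainder k" "stirling_remainder k \<le> 3/2"
    unfolding abs_le_iff by linarith+
qed

lemma ln_fact_ge:
  assumes "N \<ge> 1" shows "real N * ln (real N) - real N \<le> ln (fact N)"
proof -
  have "0 \<le> ln (real N)" using assms by simp
  then show ?thesis using stirling_remainder_bounds(1)[OF assms]
    unfolding stirling_remainder_def by (simp add: algebra_simps)
qed

lemma ln_fact_le: "ln (fact N) \<le> real N * ln (real N)"
proof (cases "N = 0")
  case False
  have "(fact N :: real) \<le> real (N ^ N)" by (rule fact_le_power)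
  hence "ln (fact N :: real) \<le> ln (real N ^ N)" by (subst ln_le_cancel_iff) auto
  thus ?thesis by (simp add: ln_realpow)
qed simp

section \<open>Elementary symmetric sums\<close>

definition esym :: "('a \<Rightarrow> real) \<Rightarrow> 'a set \<Rightarrow> nat \<Rightarrow> real" where
  "esym x P k = (\<Sum>T\<in>{T. T \<subseteq> P \<and> card T = k}. prod x T)"

lemma esym_0: "finite P \<Longrightarrow> esym x P 0 = 1"
proof -
  assume P: "finite P"
  have "{T. T \<subseteq> P \<and> card T = 0} = {{}}" using P by (auto simp: card_eq_0_iff dest: finite_subset[OF _ P])
  thus ?thesis by (simp add: esym_def)
qed

lemma esym_1: "esym x P 1 = (\<Sum>i\<in>P. x i)"
proof -
  have "{T. T \<subseteq> P \<and> card T = 1} = (\<lambda>i. {i}) ` P" by (auto simp: card_Suc_eq)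
  moreover have "inj_on (\<lambda>i. {i}) P" by (auto simp: inj_on_def)
  ultimately show ?thesis by (simp add: esym_def sum.reindex)
qed

lemma esym_empty_Suc: "esym x {} (Suc k) = 0"
  by (simp add: esym_def)

lemma card_Suc_subsets_insert:
  assumes "finite P" "a \<notin> P"
  shows "{T. T \<subseteq> insert a P \<and> card T = Suc k} =
         {T. T \<subseteq> P \<and> card T = Suc k} \<union> insert a ` {T. T \<subseteq> P \<and> card T = k}"
proof (intro equalityI subsetI)
  fix T assume T: "T \<in> {T. T \<subseteq> insert a P \<and> card T = Suc k}"
  show "T \<in> {T. T \<subseteq> P \<and> card T = Suc k} \<union> insert a ` {T. T \<subseteq> P \<and> card T = k}"
  proof (cases "a \<in> T")
    case True
    have "finite T" using T assms(1) by (auto intro: finite_subset)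
    then have "T = insert a (T - {a})" "T - {a} \<subseteq> P" "card (T - {a}) = k"
      using T True by auto
    then show ?thesis by blast
  next
    case False
    then show ?thesis using T by auto
  qed
next
  fix T assume "T \<in> {T. T \<subseteq> P \<and> card T = Suc k} \<union> insert a ` {T. T \<subseteq> P \<and> card T = k}"
  moreover have "finite U" "a \<notin> U" if "U \<subseteq> P" for U
    using that assms by (auto intro: finite_subset)
  ultimately show "T \<in> {T. T \<subseteq> insert a P \<and> card T = Suc k}" by auto
qed

lemma esym_insert:
  assumes "finite P" "a \<notin> P"
  shows "esym x (insert a P) (Suc k) = esym x P (Suc k) + x a * esym x P k"
proof -
  let ?A = "{T. T \<subseteq> P \<and> card T = Suc k}" and ?B = "{T. T \<subseteq> P \<and> card T = k}"
  have fin: "finite ?A" "finite ?B" using assms(1) by (auto intro: finite_subset[of _ "Pow P"])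
  have disj: "?A \<inter> insert a ` ?B = {}" using assms(2) by auto
  have inj: "inj_on (insert a) ?B" using assms(2) by (auto simp: inj_on_def)
  have "esym x (insert a P) (Suc k) = (\<Sum>T\<in>?A. prod x T) + (\<Sum>T\<in>insert a ` ?B. prod x T)"
    unfolding esym_def card_Suc_subsets_insert[OF assms] using fin disj by (simp add: sum.union_disjoint)
  also have "(\<Sum>T\<in>insert a ` ?B. prod x T) = (\<Sum>T\<in>?B. x a * prod x T)"
    unfolding sum.reindex[OF inj] comp_def
  proof (intro sum.cong refl)
    fix T assume "T \<in> ?B"
    then have "finite T" "a \<notin> T" using assms by (auto intro: finite_subset)
    then show "prod x (insert a T) = x a * prod x T" by simp
  qed
  finally show ?thesis by (simp add: esym_def sum_distrib_left)
qed

lemma esym_nonneg: "(\<And>i. i \<in> P \<Longrightarrow> x i \<ge> 0) \<Longrightarrow> esym x P k \<ge> 0"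
  unfolding esym_def by (intro sum_nonneg prod_nonneg) auto

lemma esym_mono:
  assumes "finite P" "P' \<subseteq> P" "\<And>i. i \<in> P \<Longrightarrow> x i \<ge> 0"
  shows "esym x P' k \<le> esym x P k"
  unfolding esym_def
proof (rule sum_mono2)
  show "finite {T. T \<subseteq> P \<and> card T = k}" using assms(1) by (auto intro: finite_subset[of _ "Pow P"])
  show "{T. T \<subseteq> P' \<and> card T = k} \<subseteq> {T. T \<subseteq> P \<and> card T = k}" using assms(2) by auto
  fix T assume "T \<in> {T. T \<subseteq> P \<and> card T = k} - {T. T \<subseteq> P' \<and> card T = k}"
  thus "0 \<le> prod x T" by (intro prod_nonneg) (use assms(3) in auto)
qed

lemma of_nat_choose_two: "real (n choose 2) = real n * (real n - 1) / 2"
proof (induction n)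
  case 0 then show ?case by (simp add: numeral_2_eq_2)
next
  case (Suc n)
  have "real (Suc n choose 2) = real (n choose 2) + real n" by (simp add: numeral_2_eq_2)
  then show ?case using Suc by (simp add: field_simps)
qed

lemma power_add_ge_linear:
  fixes S x :: real assumes "S \<ge> 0" "x \<ge> 0"
  shows "S ^ n + real n * x * S ^ (n - 1) \<le> (S + x) ^ n"
proof (induction n)
  case (Suc n)
  show ?case
  proof (cases n)
    case (Suc m)
    have "S ^ Suc n + real (Suc n) * x * S ^ n \<le> (S + x) * (S ^ n + real n * x * S ^ (n - 1))"
      using Suc assms by (simp add: algebra_simps)
    also have "\<dots> \<le> (S + x) * (S + x) ^ n"
      using Suc.IH assms by (intro mult_left_mono) auto
    finally show ?thesis by simp
  qed simp
qed simp

lemma power_add_le_quadratic: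
  fixes S x :: real assumes "S \<ge> 0" "x \<ge> 0"
  shows "(S + x) ^ n \<le> S ^ n + real n * x * S ^ (n - 1) + real (n choose 2) * x^2 * (S + x) ^ (n - 2)"
proof (induction n)
  case (Suc n)
  show ?case
  proof (cases n)
    case (Suc m)
    have "(S + x) ^ Suc n \<le> (S + x) * (S ^ n + real n * x * S ^ (n - 1) + real (n choose 2) * x^2 * (S + x) ^ (n - 2))"
      using Suc.IH assms by (simp add: mult_left_mono)
    also have "\<dots> = S ^ Suc n + real (Suc n) * x * S ^ n + real n * x^2 * S ^ m
                   + real (n choose 2) * x^2 * (S + x) ^ m"
      using Suc by (cases m) (simp_all add: algebra_simps power2_eq_square numeral_2_eq_2)
    also have "\<dots> \<le> S ^ Suc n + real (Suc n) * x * S ^ n + real n * x^2 * (S + x) ^ m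
                   + real (n choose 2) * x^2 * (S + x) ^ m"
      using assms by (simp add: power_mono mult_left_mono)
    also have "\<dots> = S ^ Suc n + real (Suc n) * x * S ^ (Suc n - 1) + real (Suc n choose 2) * x^2 * (S + x) ^ (Suc n - 2)"
      using Suc by (simp add: algebra_simps numeral_2_eq_2)
    finally show ?thesis .
  qed simp
qed simp

lemma fact_mult_esym_le_power_sum:
  assumes "finite P" "\<And>i. i \<in> P \<Longrightarrow> x i \<ge> 0"
  shows "fact k * esym x P k \<le> (\<Sum>i\<in>P. x i) ^ k"
  using assms
proof (induction P arbitrary: k rule: finite_induct)
  case empty then show ?case by (cases k) (auto simp: esym_0 esym_empty_Suc)
next
  case (insert a P)
  let ?S = "\<Sum>i\<in>P. x i"
  have xa: "x a \<ge> 0" and xP: "\<And>i. i \<in> P \<Longrightarrow> x i \<ge> 0" using insert.prems by auto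
  show ?case
  proof (cases k)
    case 0 then show ?thesis using insert by (simp add: esym_0)
  next
    case (Suc m)
    have "fact k * esym x (insert a P) k = fact (Suc m) * esym x P (Suc m) + real (Suc m) * x a * (fact m * esym x P m)"
      using Suc insert.hyps by (simp add: esym_insert algebra_simps)
    also have "\<dots> \<le> ?S ^ Suc m + real (Suc m) * x a * ?S ^ m"
      using insert.IH[OF xP, of "Suc m"] insert.IH[OF xP, of m] xa by (intro add_mono mult_left_mono) auto
    also have "\<dots> \<le> (?S + x a) ^ Suc m"
      using power_add_ge_linear[of ?S "x a" "Suc m"] xa xP by (simp add: sum_nonneg)
    finally show ?thesis using Suc insert.hyps by (simp add: add.commute)
  qed
qed

text \<open>The inductive step of the lower bound below, for $k = j + 2$, with $A_1$ and $A_0$ standing for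
  $(j+2)!\,e_{j+2}$ and $(j+1)!\,e_{j+1}$ of the smaller set.\<close>

lemma power_sum_lower_step:
  fixes S x Q A0 A1 :: real
  assumes "S \<ge> 0" "x \<ge> 0" "Q \<ge> 0"
    and IH1: "S ^ Suc (Suc j) \<le> A1 + real (Suc (Suc j) choose 2) * Q * S ^ j"
    and IH0: "S ^ Suc j \<le> A0 + real (Suc j choose 2) * Q * S ^ (j - 1)"
  shows "(S + x) ^ Suc (Suc j) \<le> A1 + real (Suc (Suc j)) * x * A0 + real (Suc (Suc j) choose 2) * (Q + x^2) * (S + x) ^ j"
proof -
  define C2 where "C2 = real (Suc (Suc j) choose 2)"
  define C1 where "C1 = real (Suc j choose 2)"
  have C2_nonneg: "C2 \<ge> 0" unfolding C2_def by simp
  have choose_rel: "real (Suc (Suc j)) * C1 = C2 * real j"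
    unfolding C1_def C2_def of_nat_choose_two by (simp add: field_simps)
  have "(S + x) ^ Suc (Suc j) \<le> S ^ Suc (Suc j) + real (Suc (Suc j)) * x * S ^ Suc j + C2 * x^2 * (S + x) ^ j"
    using power_add_le_quadratic[OF assms(1,2), of "Suc (Suc j)"] unfolding C2_def by simp
  also have "\<dots> \<le> (A1 + C2 * Q * S ^ j) + real (Suc (Suc j)) * x * (A0 + C1 * Q * S ^ (j - 1)) + C2 * x^2 * (S + x) ^ j"
    using IH1 IH0 assms unfolding C1_def C2_def by (intro add_mono mult_left_mono) auto
  also have "\<dots> = A1 + real (Suc (Suc j)) * x * A0 + C2 * Q * (S ^ j + real j * x * S ^ (j - 1)) + C2 * x^2 * (S + x) ^ j"
  proof -
    have "real (Suc (Suc j)) * x * (C1 * Q * S ^ (j - 1)) = (real (Suc (Suc j)) * C1) * (Q * x * S ^ (j - 1))"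
      by (simp only: mult_ac)
    then show ?thesis unfolding choose_rel by (simp add: algebra_simps)
  qed
  also have "\<dots> \<le> A1 + real (Suc (Suc j)) * x * A0 + C2 * Q * (S + x) ^ j + C2 * x^2 * (S + x) ^ j"
    using power_add_ge_linear[OF assms(1,2), of j] C2_nonneg assms(3) by (simp add: mult_left_mono)
  finally show ?thesis unfolding C2_def by (simp add: algebra_simps)
qed

lemma power_sum_le_fact_mult_esym:
  assumes "finite P" "\<And>i. i \<in> P \<Longrightarrow> x i \<ge> 0"
  shows "(\<Sum>i\<in>P. x i) ^ k \<le> fact k * esym x P k + real (k choose 2) * (\<Sum>i\<in>P. x i ^ 2) * (\<Sum>i\<in>P. x i) ^ (k - 2)"
  using assms
proof (induction P arbitrary: k rule: finite_induct)
  case empty then show ?case by (cases k) (auto simp: esym_0 esym_empty_Suc)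
next
  case (insert a P)
  let ?S = "\<Sum>i\<in>P. x i" and ?Q = "\<Sum>i\<in>P. x i ^ 2"
  have xa: "x a \<ge> 0" and xP: "\<And>i. i \<in> P \<Longrightarrow> x i \<ge> 0" using insert.prems by auto
  have sums: "(\<Sum>i\<in>insert a P. x i) = ?S + x a" "(\<Sum>i\<in>insert a P. x i ^ 2) = ?Q + x a ^ 2"
    using insert.hyps by (simp_all add: add.commute)
  consider "k = 0" | "k = 1" | j where "k = Suc (Suc j)" by (metis One_nat_def not0_implies_Suc)
  then show ?case
  proof cases
    case 1 then show ?thesis using insert by (simp add: esym_0 numeral_2_eq_2)
  next
    case 2 then show ?thesis using insert.hyps sums by (simp add: esym_insert esym_0 esym_1[unfolded One_nat_def] numeral_2_eq_2)
  next
    case 3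
    have IH: "?S ^ n \<le> fact n * esym x P n + real (n choose 2) * ?Q * ?S ^ (n - 2)" for n
      using insert.IH xP by blast
    have IH1: "?S ^ Suc j \<le> fact (Suc j) * esym x P (Suc j) + real (Suc j choose 2) * ?Q * ?S ^ (j - 1)"
      using IH[of "Suc j"] by simp
    have IH2: "?S ^ Suc (Suc j) \<le> fact (Suc (Suc j)) * esym x P (Suc (Suc j)) + real (Suc (Suc j) choose 2) * ?Q * ?S ^ j"
      using IH[of "Suc (Suc j)"] by simp
    have "(?S + x a) ^ k \<le> fact (Suc (Suc j)) * esym x P (Suc (Suc j)) + real (Suc (Suc j)) * x a * (fact (Suc j) * esym x P (Suc j))
          + real (k choose 2) * (?Q + x a ^ 2) * (?S + x a) ^ (k - 2)"
      using power_sum_lower_step[OF _ xa _ IH2 IH1] xP 3 by (simp add: sum_nonneg)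
    also have "fact (Suc (Suc j)) * esym x P (Suc (Suc j)) + real (Suc (Suc j)) * x a * (fact (Suc j) * esym x P (Suc j))
          = fact k * esym x (insert a P) k"
      unfolding 3 using insert.hyps by (simp add: esym_insert algebra_simps)
    finally show ?thesis unfolding sums .
  qed
qed

section \<open>The expectation of \<open>\<chi>\<^sub>k\<close> as an elementary symmetric sum\<close>

definition primes_below :: "real \<Rightarrow> nat set" where
  "primes_below y = {p. prime p \<and> real p < y}"

lemma finite_primes_below: "finite (primes_below y)"
proof -
  have "primes_below y \<subseteq> {..nat \<lceil>y\<rceil>}" unfolding primes_below_def by (auto simp: le_nat_iff le_ceiling_iff)
  thus ?thesis by (rule finite_subset) auto
qed

lemma prime_factors_prod_primes:
  assumes "finite T" "\<And>p. p \<in> T \<Longrightarrow> prime (p::nat)"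
  shows "squarefree (\<Prod>T)" "prime_factors (\<Prod>T) = T" "\<Prod>T > 0"
proof -
  show "squarefree (\<Prod>T)"
    using assms by (intro squarefree_prod_coprime) (auto intro: primes_coprime squarefree_prime)
  have "prime_factors (prod id T) = \<Union>((prime_factors \<circ> id) ` T)"
    using assms by (intro prime_factors_prod) (auto dest: prime_gt_0_nat)
  also have "\<dots> = T" using assms by (auto simp: prime_factorization_prime)
  finally show "prime_factors (\<Prod>T) = T" by simp
  show "\<Prod>T > 0" using assms by (auto intro!: prod_pos dest: prime_gt_0_nat)
qed

lemma prod_prime_factors_squarefree:
  assumes "squarefree (n::nat)" "n > 0"
  shows "\<Prod>(prime_factors n) = n"
proof -
  have "(\<Prod>p \<in> prime_factors n. p ^ multiplicity p n) = n"
    using prod_prime_factors[of n] assms by simp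
  moreover have "\<And>p. p \<in> prime_factors n \<Longrightarrow> multiplicity p n = 1"
    using squarefree_factorial_semiring'[of n] assms by auto
  ultimately show ?thesis by simp
qed

lemma bij_betw_prod_sqf_smooth: "bij_betw (\<lambda>T. \<Prod>T) (Pow (primes_below y)) (sqf_smooth y)"
proof (rule bij_betw_byWitness[where f' = prime_factors])
  have "finite T" "\<And>p. p \<in> T \<Longrightarrow> prime p" if "T \<subseteq> primes_below y" for T
    using that finite_primes_below finite_subset by (auto simp: primes_below_def)
  note prod_T = prime_factors_prod_primes[OF this]
  show "\<forall>T\<in>Pow (primes_below y). prime_factors (\<Prod>T) = T"
    using prod_T by auto
  show "(\<lambda>T. \<Prod>T) ` Pow (primes_below y) \<subseteq> sqf_smooth y"
    using prod_T by (auto simp: sqf_smooth_def primes_below_def)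
  show "\<forall>n\<in>sqf_smooth y. \<Prod>(prime_factors n) = n"
    by (auto simp: sqf_smooth_def prod_prime_factors_squarefree)
  show "prime_factors ` sqf_smooth y \<subseteq> Pow (primes_below y)"
    by (auto simp: sqf_smooth_def primes_below_def)
qed

lemma Ey_chi_eq_esym:
  "Ey y (chi k) = esym (\<lambda>p. 1 / real p) (primes_below y) k / (\<Prod>p\<in>primes_below y. 1 + 1 / real p)"
proof -
  have "(\<Sum>n\<in>sqf_smooth y. chi k n / real n) = (\<Sum>T\<in>Pow (primes_below y). chi k (\<Prod>T) / real (\<Prod>T))"
    using sum.reindex_bij_betw[OF bij_betw_prod_sqf_smooth, of "\<lambda>n. chi k n / real n"] by simp
  also have "\<dots> = (\<Sum>T\<in>Pow (primes_below y). if card T = k then (\<Prod>p\<in>T. 1 / real p) else 0)"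
  proof (rule sum.cong[OF refl])
    fix T assume "T \<in> Pow (primes_below y)"
    then have "finite T" and "\<And>p. p \<in> T \<Longrightarrow> prime p"
      using finite_primes_below finite_subset by (auto simp: primes_below_def)
    note prod_T = prime_factors_prod_primes[OF this]
    have "1 / real (\<Prod>T) = (\<Prod>p\<in>T. 1 / real p)" by (simp add: prod_dividef)
    thus "chi k (\<Prod>T) / real (\<Prod>T) = (if card T = k then (\<Prod>p\<in>T. 1 / real p) else 0)"
      using prod_T by (simp add: chi_def)
  qed
  also have "\<dots> = esym (\<lambda>p. 1 / real p) (primes_below y) k"
    unfolding esym_def using finite_primes_below by (subst sum.inter_filter[symmetric]) (auto intro!: sum.cong)
  finally show ?thesis unfolding Ey_def primes_below_def by simp
qed

section \<open>Chebyshev's bound and Mertens' theorems\<close>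

definition chebyshev_psi :: "nat \<Rightarrow> real" where
  "chebyshev_psi n = (\<Sum>d\<in>{1..n}. mangoldt d)"

lemma chebyshev_psi_mono: "m \<le> n \<Longrightarrow> chebyshev_psi m \<le> chebyshev_psi n"
  unfolding chebyshev_psi_def by (intro sum_mono2) (auto simp: mangoldt_nonneg)

lemma sum_mult_div_eq_sum_divisors:
  fixes f :: "nat \<Rightarrow> real"
  shows "(\<Sum>d\<in>{1..n}. f d * real (n div d)) = (\<Sum>m\<in>{1..n}. \<Sum>d | d dvd m. f d)"
proof (induction n)
  case (Suc n)
  have split: "real (Suc n div d) = real (n div d) + (if d dvd Suc n then 1 else 0)" if "d \<ge> 1" for d
    using that by (auto simp: div_Suc dvd_eq_mod_eq_0)
  have divisors: "{d. d dvd Suc n} = {d\<in>{1..Suc n}. d dvd Suc n}"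
    by (auto simp: Suc_le_eq intro: dvd_pos_nat dest: dvd_imp_le)
  have "(\<Sum>d\<in>{1..Suc n}. f d * real (Suc n div d)) =
        (\<Sum>d\<in>{1..Suc n}. f d * real (n div d)) + (\<Sum>d\<in>{1..Suc n}. if d dvd Suc n then f d else 0)"
    by (subst sum.distrib[symmetric]) (auto intro!: sum.cong simp: split algebra_simps)
  also have "(\<Sum>d\<in>{1..Suc n}. f d * real (n div d)) = (\<Sum>d\<in>{1..n}. f d * real (n div d))"
    by (simp add: sum.cl_ivl_Suc)
  also have "(\<Sum>d\<in>{1..Suc n}. if d dvd Suc n then f d else 0) = (\<Sum>d | d dvd Suc n. f d)"
    unfolding divisors by (rule sum.inter_filter[symmetric]) simp
  finally show ?case using Suc.IH by simp
qed simp

lemma ln_fact_eq_sum_mangoldt: "ln (fact n) = (\<Sum>d\<in>{1..n}. mangoldt d * real (n div d))"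
proof -
  have "ln (fact n :: real) = (\<Sum>m\<in>{1..n}. ln (real m))"
    unfolding fact_prod of_nat_prod by (subst ln_prod) auto
  also have "\<dots> = (\<Sum>m\<in>{1..n}. \<Sum>d | d dvd m. mangoldt d)"
    by (intro sum.cong refl) (simp add: mangoldt_sum)
  finally show ?thesis using sum_mult_div_eq_sum_divisors[of mangoldt n] by simp
qed

lemma mult_div_le_div_mult: "k * (N div d) \<le> (k * N) div (d::nat)"
proof (cases "d = 0")
  case False
  have "N div d * d \<le> N" by simp
  then have "k * (N div d) * d \<le> k * N" by (metis mult.assoc mult_le_mono2)
  then show ?thesis using False by (simp add: less_eq_div_iff_mult_less_eq)
qed simp

text \<open>By Legendre's formula, $\ln\binom{2N}{N} = \sum_d \Lambda(d)\,(\lfloor 2N/d\rfloor - 2\lfloor N/d\rfloor)$,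
  where every bracket is nonnegative and equals $1$ for $N < d \le 2N$.\<close>

lemma chebyshev_psi_double_diff_le: "chebyshev_psi (2*N) - chebyshev_psi N \<le> real N * ln 4"
proof -
  have "{1..2*N} = {1..N} \<union> {N<..2*N}" by auto
  then have "chebyshev_psi (2*N) - chebyshev_psi N = (\<Sum>d\<in>{N<..2*N}. mangoldt d)"
    unfolding chebyshev_psi_def by (simp add: sum.union_disjoint ivl_disj_int)
  also have "\<dots> = (\<Sum>d\<in>{1..2*N}. if N < d then mangoldt d else 0)"
  proof -
    have "{N<..2*N} = {d\<in>{1..2*N}. N < d}" by auto
    then show ?thesis by (simp only: sum.inter_filter[OF finite_atLeastAtMost])
  qed
  also have "\<dots> \<le> (\<Sum>d\<in>{1..2*N}. mangoldt d * (real ((2*N) div d) - 2 * real (N div d)))"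
  proof (rule sum_mono)
    fix d assume d: "d \<in> {1..2*N}"
    show "(if N < d then mangoldt d else 0) \<le> mangoldt d * (real ((2*N) div d) - 2 * real (N div d))"
    proof (cases "N < d")
      case True
      then have "N div d = 0" "1 \<le> real ((2*N) div d)"
        using d by (auto simp: less_eq_div_iff_mult_less_eq)
      then show ?thesis using True mangoldt_nonneg[of d] by (simp add: mult_le_cancel_left1)
    next
      case False
      have "real (2 * (N div d)) \<le> real ((2*N) div d)" using mult_div_le_div_mult of_nat_le_iff by blast
      thus ?thesis using False mangoldt_nonneg[of d] by simp
    qed
  qed
  also have "\<dots> = ln (fact (2*N)) - 2 * ln (fact N)"
  proof -
    have "(\<Sum>d\<in>{1..2*N}. mangoldt d * (2 * real (N div d))) = 2 * (\<Sum>d\<in>{1..N}. mangoldt d * real (N div d))"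
      by (subst sum.mono_neutral_right[of "{1..2*N}" "{1..N}"]) (auto simp: sum_distrib_left mult_ac)
    then show ?thesis unfolding ln_fact_eq_sum_mangoldt
      by (simp add: right_diff_distrib sum_subtractf)
  qed
  also have "\<dots> = ln (real ((2*N) choose N))"
  proof -
    have "fact N * fact N * ((2*N) choose N) = (fact (2*N) :: nat)"
      using binomial_fact_lemma[of N "2*N"] by (simp add: mult_2)
    then have "fact (2*N) = (fact N * fact N * real ((2*N) choose N) :: real)"
      by (metis of_nat_fact of_nat_mult)
    then show ?thesis by (simp add: ln_mult)
  qed
  also have "\<dots> \<le> ln (2 ^ (2*N))"
    using binomial_le_pow2[of "2*N" N] by (subst ln_le_cancel_iff) (auto simp flip: of_nat_le_iff)
  also have "\<dots> = real N * ln 4"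
    by (simp add: ln_realpow power_mult ln_mult)
  finally show ?thesis .
qed

lemma chebyshev_psi_le: "chebyshev_psi n \<le> 2 * ln 4 * real n"
proof (induction n rule: less_induct)
  case (less n)
  have ln4: "ln (4::real) \<ge> 0" by simp
  consider "n \<le> 1" | m where "n = 2*m" "m \<ge> 1" | m where "n = 2*m + 1" "m \<ge> 1"
  proof -
    assume small: "n \<le> 1 \<Longrightarrow> thesis"
      and even: "\<And>m. n = 2*m \<Longrightarrow> m \<ge> 1 \<Longrightarrow> thesis" and odd: "\<And>m. n = 2*m + 1 \<Longrightarrow> m \<ge> 1 \<Longrightarrow> thesis"
    show thesis
    proof (cases "n \<le> 1")
      case False
      then show thesis using even[of "n div 2"] odd[of "n div 2"] by (cases "even n") (auto elim!: evenE oddE)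
    qed (rule small)
  qed
  then show ?case
  proof cases
    case 1
    then have "chebyshev_psi n = 0" by (cases n) (auto simp: chebyshev_psi_def)
    then show ?thesis using ln4 by simp
  next
    case 2
    then have "chebyshev_psi n \<le> chebyshev_psi m + real m * ln 4"
      using chebyshev_psi_double_diff_le[of m] by simp
    also have "\<dots> \<le> 2 * ln 4 * real m + real m * ln 4"
      using less.IH[of m] 2 by (simp add: mult_ac)
    also have "\<dots> \<le> 2 * ln 4 * real n"
      using 2 ln4 by simp
    finally show ?thesis .
  next
    case 3
    then have "chebyshev_psi (m + 1) \<le> 2 * ln 4 * real (m + 1)" by (intro less.IH) simp
    moreover have "chebyshev_psi n \<le> chebyshev_psi (2*(m+1))" using 3 by (intro chebyshev_psi_mono) simp
    moreover have "3 * real (m+1) * ln 4 \<le> 2 * ln 4 * real n" using 3 ln4 by (simp add: algebra_simps)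
    ultimately show ?thesis using chebyshev_psi_double_diff_le[of "m+1"] by (simp add: algebra_simps)
  qed
qed

definition sum_mangoldt_div :: "nat \<Rightarrow> real" where
  "sum_mangoldt_div N = (\<Sum>d\<in>{1..N}. mangoldt d / real d)"

lemma of_nat_div_plus_one_ge:
  assumes "d > 0" shows "real N / real d \<le> real (N div d) + 1"
proof -
  have "real N = real (N div d) * real d + real (N mod d)"
    by (metis div_mult_mod_eq of_nat_add of_nat_mult)
  moreover have "real (N mod d) \<le> real d" using mod_less_divisor[OF assms, of N] by simp
  ultimately show ?thesis using assms by (simp add: field_simps)
qed

lemma one_le_ln_3: "1 \<le> ln (3::real)"
  using exp_le by (simp add: ln_ge_iff)

lemma mertens_first:
  assumes N: "N \<ge> 1"
  shows "\<bar>sum_mangoldt_div N - ln (real N)\<bar> \<le> 2 * ln 4"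
proof -
  have N_pos: "real N > 0" using N by simp
  have N_times: "real N * sum_mangoldt_div N = (\<Sum>d\<in>{1..N}. mangoldt d * (real N / real d))"
    unfolding sum_mangoldt_div_def by (simp add: sum_distrib_left field_simps)
  have "real N * (ln (real N) - 1) \<le> ln (fact N)" using ln_fact_ge[OF N] by (simp add: algebra_simps)
  also have "ln (fact N) \<le> real N * sum_mangoldt_div N"
    unfolding N_times ln_fact_eq_sum_mangoldt
    by (intro sum_mono mult_left_mono) (auto simp: of_nat_div_le_of_nat mangoldt_nonneg)
  finally have lower: "ln (real N) - 1 \<le> sum_mangoldt_div N" using N_pos by simp
  have "real N * sum_mangoldt_div N \<le> (\<Sum>d\<in>{1..N}. mangoldt d * (real (N div d) + 1))"
    unfolding N_times by (intro sum_mono mult_left_mono) (auto simp: of_nat_div_plus_one_ge mangoldt_nonneg)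
  also have "\<dots> = ln (fact N) + chebyshev_psi N"
    unfolding ln_fact_eq_sum_mangoldt chebyshev_psi_def by (simp add: algebra_simps sum.distrib)
  also have "\<dots> \<le> real N * (ln (real N) + 2 * ln 4)"
    using ln_fact_le[of N] chebyshev_psi_le[of N] by (simp add: algebra_simps)
  finally have upper: "sum_mangoldt_div N \<le> ln (real N) + 2 * ln 4" using N_pos by simp
  have "ln 3 \<le> ln (4::real)" by (intro ln_mono) auto
  then have "1 \<le> 2 * ln (4::real)" using one_le_ln_3 by linarith
  then show ?thesis using lower upper by (simp add: abs_le_iff)
qed

lemma summation_by_parts:
  fixes a f :: "nat \<Rightarrow> real"
  assumes "m \<le> N"
  shows "(\<Sum>d\<in>{m..N}. a d * f d) =
         (\<Sum>d\<in>{m..N}. a d) * f N + (\<Sum>d\<in>{m..<N}. (\<Sum>i\<in>{m..d}. a i) * (f d - f (Suc d)))"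
  using assms
proof (induction N rule: dec_induct)
  case (step n)
  have "{m..Suc n} = insert (Suc n) {m..n}" "{m..<Suc n} = insert n {m..<n}"
    using step.hyps by auto
  then show ?case using step.IH by (simp add: algebra_simps)
qed simp

lemma ln_ln_Suc_diff_bounds:
  fixes d :: nat assumes d: "d \<ge> 2"
  defines "u \<equiv> 1 - ln (real d) / ln (real (Suc d))"
  shows "u \<le> ln (ln (real (Suc d))) - ln (ln (real d))"
    "ln (ln (real (Suc d))) - ln (ln (real d)) \<le> u + 2 / real d ^ 2"
proof -
  have ln_d: "ln (real d) > 0" using d by simp
  have "ln 3 \<le> ln (real (Suc d))" using d by (intro ln_mono) auto
  then have ln_Suc_d: "ln (real (Suc d)) \<ge> 1" using one_le_ln_3 by linarith
  have "1 + 1 / real d = real (Suc d) / real d" using d by (simp add: field_simps)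
  then have "ln (real (Suc d)) - ln (real d) = ln (1 + 1 / real d)"
    using d by (simp add: ln_div del: of_nat_Suc)
  also have "\<dots> \<le> 1 / real d" by (rule ln_add_one_self_le_self) simp
  finally have ln_diff: "ln (real (Suc d)) - ln (real d) \<le> 1 / real d" .
  have u_eq: "u = (ln (real (Suc d)) - ln (real d)) / ln (real (Suc d))"
    using ln_Suc_d d unfolding u_def by (simp add: diff_divide_distrib)
  have u_nonneg: "0 \<le> u" unfolding u_eq using d ln_Suc_d by simp
  have "u \<le> ln (real (Suc d)) - ln (real d)"
    unfolding u_eq using d ln_Suc_d by (simp add: divide_le_eq mult_le_cancel_left1)
  then have u_le: "u \<le> 1 / real d" using ln_diff by simp
  moreover have "1 / real d \<le> 1/2" using d by (simp add: divide_le_eq)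
  ultimately have u_half: "u \<le> 1/2" by linarith
  have "ln (ln (real (Suc d))) - ln (ln (real d)) = - ln (1 - u)"
    using ln_d ln_Suc_d by (simp add: u_def ln_div)
  moreover have "u \<le> - ln (1 - u)" "- ln (1 - u) \<le> u + 2 * u^2"
    using ln_one_minus_bounds[of u] u_nonneg u_half by simp_all
  moreover have "u^2 \<le> 1 / real d ^ 2"
    using u_le u_nonneg power_mono[of u "1/real d" 2] by (simp add: power_divide)
  ultimately show "u \<le> ln (ln (real (Suc d))) - ln (ln (real d))"
    "ln (ln (real (Suc d))) - ln (ln (real d)) \<le> u + 2 / real d ^ 2" by simp_all
qed

lemma sum_ln_quotient_bounds:
  assumes N: "N \<ge> 2"
  shows "(\<Sum>d\<in>{2..<N}. 1 - ln (real d) / ln (real (Suc d))) \<le> ln (ln (real N)) - ln (ln 2)"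
    "ln (ln (real N)) - ln (ln 2) - 2 \<le> (\<Sum>d\<in>{2..<N}. 1 - ln (real d) / ln (real (Suc d)))"
proof -
  let ?u = "\<lambda>d. 1 - ln (real d) / ln (real (Suc d))"
  have tele: "(\<Sum>d\<in>{2..<N}. ln (ln (real (Suc d))) - ln (ln (real d))) = ln (ln (real N)) - ln (ln 2)"
    using sum_atLeastLessThan_telescope[OF N, of "\<lambda>d. - ln (ln (real d))"] by simp
  show "(\<Sum>d\<in>{2..<N}. ?u d) \<le> ln (ln (real N)) - ln (ln 2)"
    unfolding tele[symmetric] by (intro sum_mono) (use ln_ln_Suc_diff_bounds(1) in auto)
  have "ln (ln (real N)) - ln (ln 2) \<le> (\<Sum>d\<in>{2..<N}. ?u d + 2 / real d ^ 2)"
    unfolding tele[symmetric] by (intro sum_mono) (use ln_ln_Suc_diff_bounds(2) in auto)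
  also have "\<dots> = (\<Sum>d\<in>{2..<N}. ?u d) + 2 * (\<Sum>d\<in>{2..<N}. 1 / real d ^ 2)"
    by (simp add: sum.distrib sum_distrib_left)
  also have "\<dots> \<le> (\<Sum>d\<in>{2..<N}. ?u d) + 2"
    using sum_inverse_squares_le[of 2 "{2..<N}" N] by simp
  finally show "ln (ln (real N)) - ln (ln 2) - 2 \<le> (\<Sum>d\<in>{2..<N}. ?u d)" by simp
qed

definition sum_mangoldt_div_ln :: "nat \<Rightarrow> real" where
  "sum_mangoldt_div_ln N = (\<Sum>d\<in>{2..N}. mangoldt d / (real d * ln (real d)))"

text \<open>Partial summation against $1/\ln d$, with $\sum_{d \le x}\Lambda(d)/d = \ln x + O(1)$.\<close>

lemma sum_mangoldt_div_ln_asymp: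
  assumes N: "N \<ge> 2"
  shows "\<bar>sum_mangoldt_div_ln N - ln (ln (real N))\<bar> \<le> 11 + \<bar>ln (ln 2)\<bar>"
proof -
  define f :: "nat \<Rightarrow> real" where "f d = 1 / ln (real d)" for d
  define w where "w d = f d - f (Suc d)" for d
  define R where "R d = sum_mangoldt_div d - ln (real d)" for d
  have ln2: "ln (2::real) > 0" and ln4: "ln (4::real) = 2 * ln 2"
    using ln_realpow[of 2 2] by simp_all
  have w_nonneg: "w d \<ge> 0" if "d \<ge> 2" for d
    using that unfolding w_def f_def by (simp add: frac_le)
  have partial_sums: "(\<Sum>i\<in>{2..d}. mangoldt i / real i) = sum_mangoldt_div d" for d
  proof (cases "d = 0")
    case False
    then have "{1..d} = insert 1 {2..d}" by auto
    then show ?thesis unfolding sum_mangoldt_div_def by simp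
  qed (simp add: sum_mangoldt_div_def)
  have "sum_mangoldt_div_ln N = (\<Sum>d\<in>{2..N}. (mangoldt d / real d) * f d)"
    unfolding sum_mangoldt_div_ln_def f_def by (intro sum.cong) auto
  also have "\<dots> = sum_mangoldt_div N * f N + (\<Sum>d\<in>{2..<N}. sum_mangoldt_div d * w d)"
    unfolding summation_by_parts[OF N] partial_sums w_def ..
  also have "(\<Sum>d\<in>{2..<N}. sum_mangoldt_div d * w d) =
             (\<Sum>d\<in>{2..<N}. 1 - ln (real d) / ln (real (Suc d))) + (\<Sum>d\<in>{2..<N}. R d * w d)"
    unfolding sum.distrib[symmetric]
    by (intro sum.cong refl) (auto simp: R_def w_def f_def field_simps)
  finally have split: "sum_mangoldt_div_ln N = sum_mangoldt_div N * f N +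
      (\<Sum>d\<in>{2..<N}. 1 - ln (real d) / ln (real (Suc d))) + (\<Sum>d\<in>{2..<N}. R d * w d)"
    by simp
  have R_le: "\<bar>R d\<bar> \<le> 4 * ln 2" if "d \<ge> 1" for d
    using mertens_first[OF that] ln4 unfolding R_def by simp
  have fN: "0 < f N" "f N \<le> 1 / ln 2" using N unfolding f_def by (auto intro!: divide_left_mono)
  have "\<bar>sum_mangoldt_div N * f N - 1\<bar> = \<bar>R N\<bar> * f N"
    using N fN unfolding R_def f_def by (simp add: field_simps abs_mult)
  also have "\<dots> \<le> 4 * ln 2 * (1 / ln 2)" using R_le[of N] N fN by (intro mult_mono) auto
  finally have first_term: "\<bar>sum_mangoldt_div N * f N - 1\<bar> \<le> 4" using ln2 by simp
  have "\<bar>\<Sum>d\<in>{2..<N}. R d * w d\<bar> \<le> (\<Sum>d\<in>{2..<N}. 4 * ln 2 * w d)"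
    by (rule order_trans[OF sum_abs sum_mono])
       (use R_le w_nonneg in \<open>auto simp: abs_mult intro!: mult_right_mono\<close>)
  also have "\<dots> = 4 * ln 2 * (f 2 - f N)"
    unfolding sum_distrib_left[symmetric] w_def using sum_atLeastLessThan_telescope[OF N] by simp
  also have "\<dots> \<le> 4" using fN ln2 by (simp add: f_def right_diff_distrib)
  finally have error_term: "\<bar>\<Sum>d\<in>{2..<N}. R d * w d\<bar> \<le> 4" .
  show ?thesis
    using split first_term error_term sum_ln_quotient_bounds[OF N] by (simp add: abs_le_iff) linarith
qed

lemma sum_inverse_powers_ge_2_le:
  assumes p: "real p \<ge> 2" shows "(\<Sum>j\<in>{2..N}. 1 / real p ^ j) \<le> 2 / real p ^ 2"
proof (cases "2 \<le> N")
  case True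
  define x where "x = 1 / real p"
  have x: "0 \<le> x" "x \<le> 1/2" using p by (auto simp: x_def)
  have "(1/2) * (\<Sum>j\<in>{2..N}. x ^ j) \<le> (1 - x) * (\<Sum>j\<in>{2..N}. x ^ j)"
    using x by (intro mult_right_mono) (auto simp: sum_nonneg)
  also have "\<dots> = x^2 - x ^ Suc N" by (rule sum_gp_multiplied[OF True])
  also have "\<dots> \<le> x^2" using x by simp
  finally show ?thesis by (simp add: x_def power_divide)
qed simp

text \<open>Only primes and proper prime powers carry weight, and the latter contribute at most
  $\sum_p \sum_{j \ge 2} p^{-j} \le 2$.\<close>

lemma sum_mangoldt_div_ln_minus_sum_inverse_primes:
  assumes N: "N \<ge> 2"
  shows "0 \<le> sum_mangoldt_div_ln N - (\<Sum>p | prime p \<and> p \<le> N. 1 / real p)"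
    "sum_mangoldt_div_ln N - (\<Sum>p | prime p \<and> p \<le> N. 1 / real p) \<le> 2"
proof -
  define g where "g d = mangoldt d / (real d * ln (real d))" for d :: nat
  have g_nonneg: "g d \<ge> 0" for d
    unfolding g_def by (cases "d = 0") (auto intro!: divide_nonneg_nonneg mangoldt_nonneg)
  let ?B = "{d\<in>{2..N}. \<not> prime d}"
  let ?B' = "{d\<in>{2..N}. \<not> prime d \<and> primepow d}"
  have primes: "{p. prime p \<and> p \<le> N} = {d\<in>{2..N}. prime d}" by (auto dest: prime_ge_2_nat)
  have "(\<Sum>d\<in>{d\<in>{2..N}. prime d}. g d) = (\<Sum>p | prime p \<and> p \<le> N. 1 / real p)"
    unfolding primes by (intro sum.cong refl) (auto simp: g_def dest: prime_ge_2_nat)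
  moreover have "sum_mangoldt_div_ln N = (\<Sum>d\<in>{d\<in>{2..N}. prime d}. g d) + (\<Sum>d\<in>?B. g d)"
    unfolding sum_mangoldt_div_ln_def g_def by (subst sum.union_disjoint[symmetric]) (auto intro!: sum.cong)
  ultimately have diff: "sum_mangoldt_div_ln N - (\<Sum>p | prime p \<and> p \<le> N. 1 / real p) = (\<Sum>d\<in>?B. g d)"
    by simp
  show "0 \<le> sum_mangoldt_div_ln N - (\<Sum>p | prime p \<and> p \<le> N. 1 / real p)"
    unfolding diff by (intro sum_nonneg g_nonneg)
  have "(\<Sum>d\<in>?B. g d) = (\<Sum>d\<in>?B'. g d)"
    by (rule sum.mono_neutral_right) (auto simp: g_def mangoldt_def)
  also have "\<dots> \<le> (\<Sum>z\<in>{2..N} \<times> {2..N}. 1 / real (fst z) ^ snd z)"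
  proof (rule sum_le_included[where i = "\<lambda>z. fst z ^ snd z"])
    show "\<forall>d\<in>?B'. \<exists>z\<in>{2..N} \<times> {2..N}. fst z ^ snd z = d \<and> g d \<le> 1 / real (fst z) ^ snd z"
    proof
      fix d assume d: "d \<in> ?B'"
      then obtain p k where pk: "prime p" "k > 0" "d = p ^ k" by (auto simp: primepow_def)
      moreover have "k \<noteq> 1" using d pk by auto
      ultimately have pk: "prime p" "k \<ge> 2" "d = p ^ k" by auto
      have p2: "p \<ge> 2" using pk by (simp add: prime_ge_2_nat)
      have "k < 2 ^ k" by (rule less_exp)
      also have "\<dots> \<le> p ^ k" using p2 by (rule power_mono) simp
      finally have "p \<le> p ^ k" "k < p ^ k" using pk p2 by (auto simp: self_le_power)
      then have range: "p \<le> N" "k \<le> N" using d pk by auto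
      have "g d = 1 / (real k * real p ^ k)"
        unfolding g_def pk using pk p2 by (simp add: ln_realpow)
      also have "\<dots> \<le> 1 / real p ^ k" using pk p2 by (intro divide_left_mono) auto
      finally show "\<exists>z\<in>{2..N} \<times> {2..N}. fst z ^ snd z = d \<and> g d \<le> 1 / real (fst z) ^ snd z"
        using pk range p2 by (intro bexI[of _ "(p, k)"]) auto
    qed
  qed auto
  also have "\<dots> = (\<Sum>p\<in>{2..N}. \<Sum>j\<in>{2..N}. 1 / real p ^ j)"
    by (simp add: sum.cartesian_product case_prod_beta)
  also have "\<dots> \<le> (\<Sum>p\<in>{2..N}. 2 / real p ^ 2)"
    by (intro sum_mono sum_inverse_powers_ge_2_le) auto
  also have "\<dots> = 2 * (\<Sum>p\<in>{2..N}. 1 / real p ^ 2)" by (simp add: sum_distrib_left)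
  also have "\<dots> \<le> 2"
    using sum_inverse_squares_le[of 2 "{2..N}" "Suc N"] by (simp add: atLeastLessThanSuc_atLeastAtMost)
  finally show "sum_mangoldt_div_ln N - (\<Sum>p | prime p \<and> p \<le> N. 1 / real p) \<le> 2" unfolding diff .
qed

lemma mertens_second_nat:
  assumes "N \<ge> 2"
  shows "\<bar>(\<Sum>p | prime p \<and> p \<le> N. 1 / real p) - ln (ln (real N))\<bar> \<le> 13 + \<bar>ln (ln 2)\<bar>"
  using sum_mangoldt_div_ln_asymp[OF assms] sum_mangoldt_div_ln_minus_sum_inverse_primes[OF assms]
  by (simp add: abs_le_iff)

lemma primes_below_ge_subset: "{p\<in>primes_below y. a \<le> p} \<subseteq> {a..<nat \<lceil>y\<rceil>}"
  by (auto simp: primes_below_def zless_nat_eq_int_zless less_ceiling_iff)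

lemma sum_inverse_primes_below_ge_le:
  "(\<Sum>p\<in>primes_below y. 1 / real p) - real a \<le> (\<Sum>p\<in>{p\<in>primes_below y. a \<le> p}. 1 / real p)"
proof -
  let ?small = "{p\<in>primes_below y. p < a}"
  have "primes_below y = {p\<in>primes_below y. a \<le> p} \<union> ?small" by auto
  then have "(\<Sum>p\<in>primes_below y. 1 / real p) =
             (\<Sum>p\<in>{p\<in>primes_below y. a \<le> p}. 1 / real p) + (\<Sum>p\<in>?small. 1 / real p)"
    using finite_primes_below by (metis (no_types, lifting) sum.union_disjoint finite_Un
        disjoint_iff mem_Collect_eq not_le)
  moreover have "(\<Sum>p\<in>?small. 1 / real p) \<le> (\<Sum>p\<in>?small. 1)"
    by (intro sum_mono) (auto simp: primes_below_def dest: prime_ge_1_nat)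
  moreover have "(\<Sum>p\<in>?small. 1::real) \<le> (\<Sum>p\<in>{..<a}. 1)"
    by (intro sum_mono2) auto
  ultimately show ?thesis by simp
qed

lemma mertens_second: "\<exists>M. \<forall>y \<ge> 4. \<bar>(\<Sum>p\<in>primes_below y. 1 / real p) - ln (ln y)\<bar> \<le> M"
proof (intro exI allI impI)
  fix y :: real assume y: "y \<ge> 4"
  define N where "N = nat \<lceil>y\<rceil> - 1"
  have "real N < y" "y - 1 \<le> real N" "N \<ge> 3" using y unfolding N_def by linarith+
  moreover have "primes_below y = {p. prime p \<and> p \<le> N}"
    unfolding primes_below_def N_def using y by (auto simp: less_ceiling_iff) linarith+
  ultimately have sum_N: "\<bar>(\<Sum>p\<in>primes_below y. 1 / real p) - ln (ln (real N))\<bar> \<le> 13 + \<bar>ln (ln 2)\<bar>"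
    using mertens_second_nat[of N] by simp
  have "ln (ln (real N)) \<le> ln (ln y)" using \<open>real N < y\<close> \<open>N \<ge> 3\<close> by simp
  have "y \<le> real N * real N"
  proof -
    have "real N \<ge> 3" using \<open>N \<ge> 3\<close> by simp
    then have "3 * real N \<le> real N * real N" by (intro mult_right_mono) auto
    then show ?thesis using \<open>y - 1 \<le> real N\<close> \<open>real N \<ge> 3\<close> by linarith
  qed
  then have "ln y \<le> 2 * ln (real N)"
    using y ln_mono[of y "real N * real N"] \<open>N \<ge> 3\<close> by (simp add: ln_mult)
  then have "ln (ln y / 2) \<le> ln (ln (real N))" using y by (intro ln_mono) auto
  then have "ln (ln y) - ln 2 \<le> ln (ln (real N))" using y by (simp add: ln_div)
  show "\<bar>(\<Sum>p\<in>primes_below y. 1 / real p) - ln (ln y)\<bar> \<le> 13 + ln 2 + \<bar>ln (ln 2)\<bar>"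
    using sum_N \<open>ln (ln (real N)) \<le> ln (ln y)\<close> \<open>ln (ln y) - ln 2 \<le> ln (ln (real N))\<close>
    by (simp add: abs_le_iff)
qed

lemma prod_one_plus_inverse_primes_bounds:
  assumes y: "y > 1" and M: "\<bar>(\<Sum>p\<in>primes_below y. 1 / real p) - ln (ln y)\<bar> \<le> M"
  shows "exp (- M - 1) * ln y \<le> (\<Prod>p\<in>primes_below y. 1 + 1 / real p)"
    "(\<Prod>p\<in>primes_below y. 1 + 1 / real p) \<le> exp M * ln y"
proof -
  let ?S = "\<Sum>p\<in>primes_below y. 1 / real p"
  let ?L = "\<Sum>p\<in>primes_below y. ln (1 + 1 / real p)"
  have ge_2: "real p \<ge> 2" if "p \<in> primes_below y" for p
    using that by (auto simp: primes_below_def dest: prime_ge_2_nat)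
  have exp_L: "exp ?L = (\<Prod>p\<in>primes_below y. 1 + 1 / real p)"
    by (subst exp_sum[OF finite_primes_below]) (auto intro!: prod.cong simp: add_pos_nonneg)
  have "(\<Sum>p\<in>primes_below y. (1 / real p)^2) \<le> 1"
  proof -
    have "{p\<in>primes_below y. 2 \<le> p} = primes_below y" using ge_2 by force
    then show ?thesis
      using sum_inverse_squares_le[OF _ primes_below_ge_subset, of 2 y] by (simp add: power_divide)
  qed
  moreover have "(\<Sum>p\<in>primes_below y. 1 / real p - (1 / real p)^2) \<le> ?L"
  proof (intro sum_mono ln_one_plus_pos_lower_bound)
    fix p assume "p \<in> primes_below y"
    then show "1 / real p \<le> 1" using ge_2[of p] by simp
  qed simp
  ultimately have "?S - 1 \<le> ?L" by (simp add: sum_subtractf)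
  have ln_ln_y: "exp (ln (ln y)) = ln y" using y by simp
  have "exp (- M - 1) * ln y = exp (ln (ln y) - M - 1)" unfolding exp_diff ln_ln_y by (simp add: exp_minus field_simps)
  also have "\<dots> \<le> exp ?L" using M \<open>?S - 1 \<le> ?L\<close> by (simp add: abs_le_iff)
  finally show "exp (- M - 1) * ln y \<le> (\<Prod>p\<in>primes_below y. 1 + 1 / real p)" unfolding exp_L .
  have "?L \<le> ?S" by (intro sum_mono ln_add_one_self_le_self) auto
  then have "exp ?L \<le> exp (ln (ln y) + M)" using M by (simp add: abs_le_iff)
  then show "(\<Prod>p\<in>primes_below y. 1 + 1 / real p) \<le> exp M * ln y"
    unfolding exp_L exp_add ln_ln_y by (simp add: mult.commute)
qed

section \<open>Size of the terms $l^k/k!$ for $k$ near $2l$\<close>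

lemma ln_pow_div_fact_near_double:
  fixes l \<xi> a :: real
  assumes k: "k \<ge> 1" and l: "l > 0" and dev: "\<bar>real k - 2 * l\<bar> \<le> \<xi>"
    and small: "2 * \<xi> \<le> real k" and var: "\<xi>^2 \<le> a * real k"
  shows "2 * l - 2 * a - 3/2 - real k * ln 2 - ln (real k) / 2 \<le> ln (l ^ k / fact k)"
    "ln (l ^ k / fact k) \<le> 2 * l - 1/2 - real k * ln 2 - ln (real k) / 2"
proof -
  define K where "K = real k"
  define v where "v = (K - 2 * l) / K"
  have K_pos: "K > 0" using k by (simp add: K_def)
  have Kv: "K * v = K - 2 * l" using K_pos by (simp add: v_def)
  have v_half: "\<bar>v\<bar> \<le> 1/2"
    using dev small K_pos unfolding v_def K_def by (simp add: abs_div divide_le_eq)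
  have Kv2: "K * v^2 \<le> a"
  proof -
    have "K * v^2 = (K - 2 * l)^2 / K" using K_pos by (simp add: v_def power2_eq_square)
    also have "\<dots> \<le> \<xi>^2 / K"
      using dev K_pos unfolding K_def by (intro divide_right_mono) (auto simp: abs_le_square_iff[symmetric] power2_abs)
    also have "\<dots> \<le> a" using var K_pos unfolding K_def by (simp add: divide_le_eq mult.commute)
    finally show ?thesis .
  qed
  have v_lt_1: "1 - v > 0" using v_half by simp
  have l_eq: "l = K * (1 - v) / 2" using Kv by (simp add: algebra_simps)
  have "ln (l ^ k / fact k) = K * ln l - ln (fact k)"
    using l by (simp add: K_def ln_div ln_realpow)
  also have "ln l = ln K + ln (1 - v) - ln 2"
    unfolding l_eq using K_pos v_lt_1 ln_div[of "K * (1 - v)" 2] ln_mult[of K "1 - v"] by simp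
  also have "ln (fact k) = stirling_remainder k + (K + 1/2) * ln K - K"
    unfolding stirling_remainder_def K_def by simp
  finally have ln_eq: "ln (l ^ k / fact k) = K * ln (1 - v) + K - K * ln 2 - ln K / 2 - stirling_remainder k"
    by (simp add: algebra_simps)
  have "K * (- v - 2 * v^2) \<le> K * ln (1 - v)" "K * ln (1 - v) \<le> K * (- v)"
    using ln_one_minus_bounds[OF v_half] K_pos by (simp_all only: mult_left_mono less_imp_le)
  then have "2 * l - 2 * a \<le> K * ln (1 - v) + K" "K * ln (1 - v) + K \<le> 2 * l"
    using Kv Kv2 by (simp_all add: algebra_simps)
  then show "2 * l - 2 * a - 3/2 - real k * ln 2 - ln (real k) / 2 \<le> ln (l ^ k / fact k)"
    "ln (l ^ k / fact k) \<le> 2 * l - 1/2 - real k * ln 2 - ln (real k) / 2"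
    unfolding ln_eq using stirling_remainder_bounds[OF k] by (simp_all add: K_def)
qed

lemma pow_div_fact_near_double:
  fixes l \<xi> a :: real
  assumes "k \<ge> 1" "l > 0" "\<bar>real k - 2 * l\<bar> \<le> \<xi>" "2 * \<xi> \<le> real k" "\<xi>^2 \<le> a * real k"
  shows "exp (2 * l - 2 * a - 3/2) / (2 ^ k * sqrt (real k)) \<le> l ^ k / fact k"
    "l ^ k / fact k \<le> exp (2 * l - 1/2) / (2 ^ k * sqrt (real k))"
proof -
  have k_pos: "real k > 0" using assms(1) by simp
  have ln_denom: "ln (2 ^ k * sqrt (real k)) = real k * ln 2 + ln (real k) / 2"
    using k_pos by (simp add: ln_mult ln_realpow ln_sqrt)
  have pos: "0 < l ^ k / fact k" "0 < 2 ^ k * sqrt (real k)" using assms(2) k_pos by simp_all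
  have "exp (2 * l - 2 * a - 3/2) / (2 ^ k * sqrt (real k)) = exp (2 * l - 2 * a - 3/2 - ln (2 ^ k * sqrt (real k)))"
    using pos by (simp add: exp_diff)
  also have "\<dots> \<le> exp (ln (l ^ k / fact k))"
    using ln_pow_div_fact_near_double(1)[OF assms] unfolding ln_denom by simp
  finally show "exp (2 * l - 2 * a - 3/2) / (2 ^ k * sqrt (real k)) \<le> l ^ k / fact k"
    using pos by simp
  have "exp (ln (l ^ k / fact k)) \<le> exp (2 * l - 1/2 - ln (2 ^ k * sqrt (real k)))"
    using ln_pow_div_fact_near_double(2)[OF assms] unfolding ln_denom by simp
  also have "\<dots> = exp (2 * l - 1/2) / (2 ^ k * sqrt (real k))"
    using pos by (simp add: exp_diff)
  finally show "l ^ k / fact k \<le> exp (2 * l - 1/2) / (2 ^ k * sqrt (real k))"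
    using pos by simp
qed

lemma fact_mult_esym_le_exp:
  assumes "finite P" "\<And>i. i \<in> P \<Longrightarrow> x i \<ge> 0"
    and S: "(\<Sum>i\<in>P. x i) \<le> l + M" and l: "l > 0" and M: "M \<ge> 0" and k: "real k \<le> B * l"
  shows "fact k * esym x P k \<le> exp (B * M) * l ^ k"
proof -
  have "fact k * esym x P k \<le> (\<Sum>i\<in>P. x i) ^ k" by (rule fact_mult_esym_le_power_sum[OF assms(1,2)])
  also have "\<dots> \<le> (l * (1 + M / l)) ^ k"
    using S assms(2) l by (intro power_mono) (auto simp: algebra_simps sum_nonneg)
  also have "\<dots> \<le> l ^ k * exp (real k * (M / l))"
    using one_plus_power_le_exp[of "M / l" k] l M by (simp add: power_mult_distrib mult_left_mono)
  also have "\<dots> \<le> l ^ k * exp (B * M)"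
  proof -
    have "real k / l \<le> B" using k l by (simp add: divide_le_eq)
    then have "real k / l * M \<le> B * M" using M by (rule mult_right_mono)
    then show ?thesis using l by simp
  qed
  finally show ?thesis by (simp add: mult.commute)
qed

text \<open>The subfamily \<open>P'\<close> has small $\sum x_i^2$, so the lower bound $S^k - \binom{k}{2} Q S^{k-2}$
  for $k!\,e_k$ loses at most half of $S^k$.\<close>

lemma fact_mult_esym_ge_exp:
  assumes P: "finite P" "\<And>i. i \<in> P \<Longrightarrow> x i \<ge> 0" "P' \<subseteq> P"
    and S: "l - K \<le> (\<Sum>i\<in>P'. x i)" and Q: "(\<Sum>i\<in>P'. x i ^ 2) \<le> 1 / (4 * B^2)"
    and K: "K \<ge> 0" "2 * K \<le> l" and l: "l > 0" and B: "B > 0" and k: "real k \<le> B * l"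
  shows "exp (- 2 * B * K) * l ^ k / 2 \<le> fact k * esym x P k"
proof -
  define S' where "S' = (\<Sum>i\<in>P'. x i)"
  define Q' where "Q' = (\<Sum>i\<in>P'. x i ^ 2)"
  have fin': "finite P'" using P finite_subset by blast
  have S'_half: "l \<le> 2 * S'" using S K unfolding S'_def by simp
  have S'_pos: "S' > 0" using S'_half l by simp
  have "real (k choose 2) * Q' * S' ^ (k - 2) \<le> S' ^ k / 2"
  proof (cases "k \<ge> 2")
    case True
    have "B * l \<le> B * (2 * S')" using S'_half B by (intro mult_left_mono) auto
    then have "real k ^ 2 \<le> (2 * B * S') ^ 2" using k by (intro power_mono) auto
    then have "real (k choose 2) \<le> 2 * B^2 * S'^2"
      unfolding of_nat_choose_two by (simp add: power2_eq_square field_simps)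
    then have "real (k choose 2) * Q' \<le> 2 * B^2 * S'^2 * (1 / (4 * B^2))"
      using Q unfolding Q'_def by (intro mult_mono) (auto simp: sum_nonneg)
    also have "\<dots> = S'^2 / 2" using B by simp
    finally have "real (k choose 2) * Q' * S' ^ (k - 2) \<le> S'^2 / 2 * S' ^ (k - 2)"
      using S'_pos by (intro mult_right_mono) auto
    also have "\<dots> = S' ^ k / 2"
    proof -
      have "S'^2 * S' ^ (k - 2) = S' ^ k" using True by (metis power_add le_add_diff_inverse)
      then show ?thesis by simp
    qed
    finally show ?thesis .
  next
    case False
    then have "real (k choose 2) = 0" by simp
    then show ?thesis using S'_pos by (simp only:) simp
  qed
  moreover have "S' ^ k \<le> fact k * esym x P' k + real (k choose 2) * Q' * S' ^ (k - 2)"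
    unfolding S'_def Q'_def using fin' P by (intro power_sum_le_fact_mult_esym) auto
  moreover have "fact k * esym x P' k \<le> fact k * esym x P k"
    using esym_mono[OF P(1,3,2)] by simp
  ultimately have "S' ^ k / 2 \<le> fact k * esym x P k" by linarith
  moreover have "exp (- 2 * B * K) * l ^ k \<le> S' ^ k"
  proof -
    have "real k / l \<le> B" using k l by (simp add: divide_le_eq)
    then have "real k / l * K \<le> B * K" using K(1) by (rule mult_right_mono)
    then have "exp (- 2 * B * K) \<le> exp (- 2 * real k * (K / l))" by simp
    also have "\<dots> \<le> (1 - K / l) ^ k"
      using K l by (intro exp_le_one_minus_power) (auto simp: divide_le_eq)
    finally have "exp (- 2 * B * K) * l ^ k \<le> (1 - K / l) ^ k * l ^ k"
      using l by (simp add: mult_right_mono)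
    also have "\<dots> = (l - K) ^ k"
    proof -
      have "(1 - K / l) * l = l - K" using l by (simp add: field_simps)
      then show ?thesis by (metis power_mult_distrib)
    qed
    also have "\<dots> \<le> S' ^ k" using S K unfolding S'_def by (intro power_mono) auto
    finally show ?thesis .
  qed
  ultimately show ?thesis by simp
qed

lemma Ey_chi_le:
  assumes y: "y \<ge> 4" and M: "\<bar>(\<Sum>p\<in>primes_below y. 1 / real p) - ln (ln y)\<bar> \<le> M"
    and l: "ln (ln y) > 0" and k: "real k \<le> B * ln (ln y)"
  shows "Ey y (chi k) \<le> exp (B * M) / exp (- M - 1) * (ln (ln y) ^ k / (ln y * fact k))"
proof -
  define l where "l = ln (ln y)"
  define E where "E = esym (\<lambda>p. 1 / real p) (primes_below y) k"
  have M_nonneg: "M \<ge> 0" using M by linarith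
  have ln_y: "ln y > 0" using y by simp
  have E_nonneg: "E \<ge> 0" unfolding E_def by (rule esym_nonneg) simp
  have Pr: "exp (- M - 1) * ln y \<le> (\<Prod>p\<in>primes_below y. 1 + 1 / real p)"
    using prod_one_plus_inverse_primes_bounds(1)[OF _ M] y by simp
  have "fact k * E \<le> exp (B * M) * l ^ k"
    unfolding E_def using M l M_nonneg k
    by (intro fact_mult_esym_le_exp) (auto simp: finite_primes_below l_def abs_le_iff)
  then have "E / (\<Prod>p\<in>primes_below y. 1 + 1 / real p) \<le> exp (B * M) * l ^ k / fact k / (exp (- M - 1) * ln y)"
    using Pr E_nonneg ln_y l by (intro frac_le) (auto simp: field_simps l_def)
  then show ?thesis unfolding Ey_chi_eq_esym E_def l_def by (simp add: mult_ac)
qed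

lemma Ey_chi_ge:
  fixes P0 :: nat
  assumes y: "y \<ge> 4" and M: "\<bar>(\<Sum>p\<in>primes_below y. 1 / real p) - ln (ln y)\<bar> \<le> M"
    and P0: "P0 \<ge> 2" "4 * B^2 \<le> real P0 - 1" and B: "B > 0"
    and l: "2 * (M + real P0) + 1 \<le> ln (ln y)" and k: "real k \<le> B * ln (ln y)"
  shows "exp (- 2 * B * (M + real P0)) / (2 * exp M) * (ln (ln y) ^ k / (ln y * fact k)) \<le> Ey y (chi k)"
proof -
  define l where "l = ln (ln y)"
  define K where "K = M + real P0"
  define E where "E = esym (\<lambda>p. 1 / real p) (primes_below y) k"
  define P' where "P' = {p\<in>primes_below y. P0 \<le> p}"
  have K_nonneg: "K \<ge> 0" using M by (simp add: K_def)
  have l_pos: "l > 0" using l K_nonneg by (simp add: l_def K_def)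
  have ln_y: "ln y > 0" using y by simp
  have E_nonneg: "E \<ge> 0" unfolding E_def by (rule esym_nonneg) simp
  have Pr: "(\<Prod>p\<in>primes_below y. 1 + 1 / real p) \<le> exp M * ln y"
    using prod_one_plus_inverse_primes_bounds(2)[OF _ M] y by simp
  have Pr_pos: "(\<Prod>p\<in>primes_below y. 1 + 1 / real p) > 0"
    by (intro prod_pos) (simp add: add_pos_nonneg)
  have "l - K \<le> (\<Sum>p\<in>P'. 1 / real p)"
    using sum_inverse_primes_below_ge_le[of y P0] M unfolding P'_def K_def l_def by (simp add: abs_le_iff)
  moreover have "(\<Sum>p\<in>P'. (1 / real p) ^ 2) \<le> 1 / (4 * B^2)"
  proof -
    have "(\<Sum>p\<in>P'. (1 / real p) ^ 2) \<le> 1 / (real P0 - 1)"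
      unfolding P'_def using sum_inverse_squares_le[OF P0(1) primes_below_ge_subset]
      by (simp add: power_divide)
    also have "\<dots> \<le> 1 / (4 * B^2)" using P0 B by (intro divide_left_mono) auto
    finally show ?thesis .
  qed
  ultimately have "exp (- 2 * B * K) * l ^ k / 2 \<le> fact k * E"
    unfolding E_def using K_nonneg l l_pos B k
    by (intro fact_mult_esym_ge_exp) (auto simp: finite_primes_below P'_def l_def K_def)
  then have "exp (- 2 * B * K) / (2 * exp M) * (l ^ k / (ln y * fact k)) \<le> E / (exp M * ln y)"
    using ln_y by (simp add: field_simps)
  also have "\<dots> \<le> E / (\<Prod>p\<in>primes_below y. 1 + 1 / real p)"
    using Pr Pr_pos E_nonneg by (intro divide_left_mono) auto
  finally show ?thesis unfolding Ey_chi_eq_esym E_def l_def K_def .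
qed

lemma Ey_chi_asymp:
  fixes B :: real assumes B: "B \<ge> 1"
  obtains c C L0 where "c > 0" "C > 0" and
    "\<And>y k. y \<ge> 4 \<Longrightarrow> ln (ln y) \<ge> L0 \<Longrightarrow> real k \<le> B * ln (ln y) \<Longrightarrow>
       c * (ln (ln y) ^ k / (ln y * fact k)) \<le> Ey y (chi k) \<and>
       Ey y (chi k) \<le> C * (ln (ln y) ^ k / (ln y * fact k))"
proof -
  obtain M where M: "\<And>y. y \<ge> 4 \<Longrightarrow> \<bar>(\<Sum>p\<in>primes_below y. 1 / real p) - ln (ln y)\<bar> \<le> M"
    using mertens_second by blast
  have M_nonneg: "M \<ge> 0" using M[of 4] by linarith
  define P0 :: nat where "P0 = nat \<lceil>4 * B^2\<rceil> + 2"
  have P0: "P0 \<ge> 2" "4 * B^2 \<le> real P0 - 1"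
    unfolding P0_def by simp_all (use le_of_int_ceiling[of "4 * B^2"] in linarith)
  show thesis
  proof
    show "exp (- 2 * B * (M + real P0)) / (2 * exp M) > 0" "exp (B * M) / exp (- M - 1) > 0" by simp_all
    fix y :: real and k :: nat
    assume y: "y \<ge> 4" and l: "ln (ln y) \<ge> 2 * (M + real P0) + 1" and k: "real k \<le> B * ln (ln y)"
    have "0 < 2 * (M + real P0) + 1" using M_nonneg by simp
    then have "ln (ln y) > 0" using l by (rule less_le_trans)
    then show "exp (- 2 * B * (M + real P0)) / (2 * exp M) * (ln (ln y) ^ k / (ln y * fact k)) \<le> Ey y (chi k) \<and>
       Ey y (chi k) \<le> exp (B * M) / exp (- M - 1) * (ln (ln y) ^ k / (ln y * fact k))"
      using Ey_chi_ge[OF y M[OF y] P0 _ l k] Ey_chi_le[OF y M[OF y] _ k] B by simp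
  qed
qed

section \<open>The asymptotic for $y = \exp(2^h)$\<close>

lemma four_le_exp_pow2: "h \<ge> 1 \<Longrightarrow> 4 \<le> exp (2 ^ h :: real)"
proof -
  assume "h \<ge> 1"
  then have "(2::real) \<le> 2 ^ h" by (metis power_one_right power_increasing one_le_numeral)
  moreover have "(2::real) * 2 \<le> exp 1 * exp 1"
    using exp_ge_add_one_self[of 1] by (intro mult_mono) auto
  ultimately show ?thesis by (metis exp_add exp_le_cancel_iff mult_2 numeral_Bit0 one_add_one order_trans)
qed

lemma ln_ln_bounds_of_pow2_range:
  fixes \<epsilon> M x :: real
  assumes "0 \<le> \<epsilon>" "M \<ge> 0" "x \<ge> exp (exp M)"
    and "ln x powr \<epsilon> \<le> 2 ^ h" "2 ^ h \<le> ln x powr (1 - \<epsilon>)"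
  shows "M \<le> ln (ln x)" "\<epsilon> * ln (ln x) \<le> real h * ln 2" "real h * ln 2 \<le> ln (ln x)"
proof -
  have "exp M \<le> ln x" using assms(3) ln_mono[of "exp (exp M)" x] by simp
  then have ln_x: "ln x > 0" using exp_gt_zero[of M] by linarith
  show lnln: "M \<le> ln (ln x)" using \<open>exp M \<le> ln x\<close> ln_mono[of "exp M" "ln x"] by simp
  show "\<epsilon> * ln (ln x) \<le> real h * ln 2"
    using assms(4) ln_x ln_mono[of "ln x powr \<epsilon>" "2 ^ h"] by (simp add: ln_powr ln_realpow)
  have "real h * ln 2 \<le> (1 - \<epsilon>) * ln (ln x)"
    using assms(5) ln_x ln_mono[of "2 ^ h" "ln x powr (1 - \<epsilon>)"] by (simp add: ln_powr ln_realpow)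
  also have "\<dots> \<le> ln (ln x)" using lnln assms(1,2) by (simp add: algebra_simps)
  finally show "real h * ln 2 \<le> ln (ln x)" .
qed

lemma Ey_chi_asymp_pow2:
  fixes \<epsilon> A :: real
  assumes \<epsilon>: "0 < \<epsilon>" "\<epsilon> \<le> 1" and A: "A \<ge> 1"
  shows "\<exists>c C x0. c > 0 \<and> C > 0 \<and> (\<forall>x::real. x \<ge> x0 \<longrightarrow>
           (\<forall>(h::nat) (k::nat).
              ln x powr \<epsilon> \<le> 2 ^ h \<and> 2 ^ h \<le> ln x powr (1 - \<epsilon>) \<and>
              real k \<le> A * ln (ln x) \<longrightarrow>
              c * ((real h * ln 2) ^ k / (2 ^ h * fact k)) \<le> Ey (exp (2 ^ h)) (chi k) \<and>
              Ey (exp (2 ^ h)) (chi k) \<le> C * ((real h * ln 2) ^ k / (2 ^ h * fact k))))"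
proof -
  have B: "A / \<epsilon> \<ge> 1" using \<epsilon> A by (simp add: field_simps)
  obtain c C L0 where cC: "c > 0" "C > 0" and asymp:
    "\<And>y k. y \<ge> 4 \<Longrightarrow> ln (ln y) \<ge> L0 \<Longrightarrow> real k \<le> A / \<epsilon> * ln (ln y) \<Longrightarrow>
       c * (ln (ln y) ^ k / (ln y * fact k)) \<le> Ey y (chi k) \<and>
       Ey y (chi k) \<le> C * (ln (ln y) ^ k / (ln y * fact k))"
    using Ey_chi_asymp[OF B] by blast
  define M where "M = max L0 (ln 2) / \<epsilon>"
  have "\<forall>x::real. x \<ge> exp (exp M) \<longrightarrow> (\<forall>(h::nat) (k::nat).
              ln x powr \<epsilon> \<le> 2 ^ h \<and> 2 ^ h \<le> ln x powr (1 - \<epsilon>) \<and>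
              real k \<le> A * ln (ln x) \<longrightarrow>
              c * ((real h * ln 2) ^ k / (2 ^ h * fact k)) \<le> Ey (exp (2 ^ h)) (chi k) \<and>
              Ey (exp (2 ^ h)) (chi k) \<le> C * ((real h * ln 2) ^ k / (2 ^ h * fact k)))"
  proof (intro allI impI)
    fix x :: real and h k :: nat
    assume x: "x \<ge> exp (exp M)" and hk: "ln x powr \<epsilon> \<le> 2 ^ h \<and> 2 ^ h \<le> ln x powr (1 - \<epsilon>) \<and>
              real k \<le> A * ln (ln x)"
    have M: "M \<ge> 0" unfolding M_def using \<epsilon> by (intro divide_nonneg_pos) (auto simp: le_max_iff_disj)
    have "ln x powr \<epsilon> \<le> 2 ^ h" "2 ^ h \<le> ln x powr (1 - \<epsilon>)" using hk by simp_all
    note lnln = ln_ln_bounds_of_pow2_range[OF less_imp_le[OF \<epsilon>(1)] M x this]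
    have "max L0 (ln 2) = \<epsilon> * M" using \<epsilon> by (simp add: M_def)
    also have "\<dots> \<le> \<epsilon> * ln (ln x)" using lnln(1) \<epsilon> by (intro mult_left_mono) auto
    also have "\<dots> \<le> real h * ln 2" using lnln(2) .
    finally have h: "L0 \<le> real h * ln 2" "h \<ge> 1" by (auto intro: Nat.gr0I)
    have "ln (ln x) \<le> real h * ln 2 / \<epsilon>" using lnln(2) \<epsilon> by (simp add: pos_le_divide_eq mult.commute)
    then have "A * ln (ln x) \<le> A * (real h * ln 2 / \<epsilon>)" using A by (intro mult_left_mono) auto
    then have "real k \<le> A / \<epsilon> * ln (ln (exp (2 ^ h)))" using hk by (simp add: ln_realpow)
    then show "c * ((real h * ln 2) ^ k / (2 ^ h * fact k)) \<le> Ey (exp (2 ^ h)) (chi k) \<and>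
              Ey (exp (2 ^ h)) (chi k) \<le> C * ((real h * ln 2) ^ k / (2 ^ h * fact k))"
      using asymp[of "exp (2 ^ h)" k] four_le_exp_pow2[OF h(2)] h(1) by (simp add: ln_realpow)
  qed
  then show ?thesis using cC by blast
qed

lemma exp_double_mult_ln2_div_powers:
  assumes "real k = real h + real_of_int t"
  shows "exp (2 * (real h * ln 2)) / (2 ^ h * 2 ^ k) = 1 / 2 powr t"
proof -
  have "exp (2 * (real h * ln 2)) = 2 powr (2 * real h)" by (simp add: powr_def)
  moreover have "2 ^ h * 2 ^ k = (2::real) powr (2 * real h + t)"
    by (simp add: powr_realpow[symmetric] powr_add[symmetric] assms)
  ultimately show ?thesis by (simp add: powr_add divide_simps)
qed

lemma two_sqrt_le_mult:
  fixes \<epsilon> L :: real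
  assumes \<epsilon>: "0 < \<epsilon>" and L: "4 / \<epsilon>^2 \<le> L"
  shows "2 * sqrt L \<le> \<epsilon> * L"
proof -
  have "4 / \<epsilon>^2 > 0" using \<epsilon> by simp
  then have L_pos: "L > 0" using L by linarith
  have "\<epsilon>^2 * (4 / \<epsilon>^2) \<le> \<epsilon>^2 * L" using L by (intro mult_left_mono) auto
  then have "2^2 \<le> (\<epsilon> * sqrt L)^2" using \<epsilon> L_pos by (simp add: power_mult_distrib)
  then have "2 \<le> \<epsilon> * sqrt L" by (rule power2_le_imp_le) (use \<epsilon> L_pos in simp)
  then have "2 * sqrt L \<le> \<epsilon> * sqrt L * sqrt L" using L_pos by (intro mult_right_mono) auto
  then show ?thesis using L_pos by (simp add: mult.assoc)
qed

lemma pow_div_fact_at_shifted_index: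
  fixes \<epsilon> L :: real and h :: nat and t :: int
  assumes \<epsilon>: "0 < \<epsilon>" and L: "L \<ge> 4 / \<epsilon>^2"
    and h: "\<epsilon> * L \<le> real h * ln 2" "real h * ln 2 \<le> L"
    and t: "\<bar>real_of_int t - real h * (ln 4 - 1)\<bar> \<le> sqrt L"
  defines "k \<equiv> nat (int h + t)"
  shows "real k \<le> 3 * L"
    "exp (- 2/\<epsilon> - 3/2) / sqrt 3 * (1 / (2 powr t * sqrt L)) \<le> (real h * ln 2) ^ k / (2 ^ h * fact k)"
    "(real h * ln 2) ^ k / (2 ^ h * fact k) \<le> exp (- 1/2) / sqrt \<epsilon> * (1 / (2 powr t * sqrt L))"
proof -
  define l where "l = real h * ln 2"
  define \<xi> where "\<xi> = sqrt L"
  have "4 / \<epsilon>^2 > 0" using \<epsilon> by simp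
  then have L_pos: "L > 0" using L by linarith
  have \<epsilon>L_pos: "\<epsilon> * L > 0" using \<epsilon> L_pos by simp
  have \<xi>_pos: "\<xi> > 0" and \<xi>_sq: "\<xi>^2 = L" using L_pos by (simp_all add: \<xi>_def)
  have two_\<xi>: "2 * \<xi> \<le> \<epsilon> * L" unfolding \<xi>_def by (rule two_sqrt_le_mult[OF \<epsilon> L])
  have \<xi>_le_L: "\<xi> \<le> L" using two_\<xi> h \<xi>_pos by linarith
  have dev: "\<bar>real_of_int t + real h - 2 * l\<bar> \<le> \<xi>"
    using t ln_realpow[of 2 2] unfolding l_def \<xi>_def by (simp add: algebra_simps)
  have k_eq: "real k = real h + real_of_int t"
    using dev two_\<xi> h \<xi>_pos unfolding k_def l_def by (simp add: abs_le_iff)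
  have l_range: "\<epsilon> * L \<le> l" "l \<le> L" using h by (simp_all add: l_def)
  then have k_lower: "\<epsilon> * L \<le> real k"
    using dev two_\<xi> unfolding k_eq abs_le_iff by linarith
  show k_upper: "real k \<le> 3 * L"
    using l_range dev \<xi>_le_L unfolding k_eq abs_le_iff by linarith
  have k_pos: "k \<ge> 1" using k_lower \<epsilon>L_pos by simp
  have l_pos: "l > 0" using h \<epsilon>L_pos unfolding l_def by linarith
  have "\<xi>^2 \<le> 1/\<epsilon> * real k" using k_lower \<epsilon> by (simp add: \<xi>_sq field_simps)
  note bounds = pow_div_fact_near_double[OF k_pos _ _ _ this, of l]
  have scale: "exp (2 * l) / (2 ^ h * 2 ^ k) = 1 / 2 powr t"
    unfolding l_def by (rule exp_double_mult_ln2_div_powers[OF k_eq])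
  have sqrt_k: "sqrt \<epsilon> * sqrt L \<le> sqrt (real k)" "sqrt (real k) \<le> sqrt 3 * sqrt L"
    using k_lower k_upper by (simp_all flip: real_sqrt_mult)
  have "exp (- 2/\<epsilon> - 3/2) / sqrt 3 * (1 / (2 powr t * sqrt L))
        = exp (- 2/\<epsilon> - 3/2) / (2 powr t * (sqrt 3 * sqrt L))" by simp
  also have "\<dots> \<le> exp (- 2/\<epsilon> - 3/2) / (2 powr t * sqrt (real k))"
    using sqrt_k(2) k_pos L_pos by (intro divide_left_mono mult_left_mono mult_pos_pos) auto
  also have "\<dots> = exp (- 2/\<epsilon> - 3/2) * (exp (2 * l) / (2 ^ h * 2 ^ k)) / sqrt (real k)"
    unfolding scale by simp
  also have "\<dots> = exp (2 * l - 2 * (1/\<epsilon>) - 3/2) / (2 ^ k * sqrt (real k)) / 2 ^ h"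
  proof -
    have "exp (- 2/\<epsilon> - 3/2) * exp (2 * l) = exp (2 * l - 2 * (1/\<epsilon>) - 3/2)"
      by (simp flip: exp_add)
    then show ?thesis by (simp add: field_simps)
  qed
  also have "\<dots> \<le> l ^ k / fact k / 2 ^ h"
    using bounds(1) l_pos dev two_\<xi> k_lower unfolding k_eq by (intro divide_right_mono) (simp_all add: add.commute)
  finally show "exp (- 2/\<epsilon> - 3/2) / sqrt 3 * (1 / (2 powr t * sqrt L)) \<le> (real h * ln 2) ^ k / (2 ^ h * fact k)"
    by (simp add: l_def field_simps)
  have "(real h * ln 2) ^ k / (2 ^ h * fact k) = l ^ k / fact k / 2 ^ h" by (simp add: l_def field_simps)
  also have "\<dots> \<le> exp (2 * l - 1/2) / (2 ^ k * sqrt (real k)) / 2 ^ h"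
    using bounds(2) l_pos dev two_\<xi> k_lower unfolding k_eq by (intro divide_right_mono) (simp_all add: add.commute)
  also have "\<dots> = exp (- 1/2) * (exp (2 * l) / (2 ^ h * 2 ^ k)) / sqrt (real k)"
  proof -
    have "exp (- 1/2) * exp (2 * l) = exp (2 * l - 1/2)" by (simp flip: exp_add)
    then show ?thesis by (simp add: field_simps)
  qed
  also have "\<dots> = exp (- 1/2) / (2 powr t * sqrt (real k))"
    unfolding scale by simp
  also have "\<dots> \<le> exp (- 1/2) / (2 powr t * (sqrt \<epsilon> * sqrt L))"
    using sqrt_k(1) \<epsilon> L_pos k_pos by (intro divide_left_mono mult_left_mono mult_pos_pos) auto
  also have "\<dots> = exp (- 1/2) / sqrt \<epsilon> * (1 / (2 powr t * sqrt L))" by simp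
  finally show "(real h * ln 2) ^ k / (2 ^ h * fact k) \<le> exp (- 1/2) / sqrt \<epsilon> * (1 / (2 powr t * sqrt L))" .
qed

lemma Ey_chi_shifted_asymp_pow2:
  fixes \<epsilon> :: real
  assumes \<epsilon>: "0 < \<epsilon>" "\<epsilon> \<le> 1"
  shows "\<exists>c C x0. c > 0 \<and> C > 0 \<and> (\<forall>x::real. x \<ge> x0 \<longrightarrow>
           (\<forall>(h::nat) (t::int).
              ln x powr \<epsilon> \<le> 2 ^ h \<and> 2 ^ h \<le> ln x powr (1 - \<epsilon>) \<and>
              \<bar>real_of_int t - real h * (ln 4 - 1)\<bar> \<le> sqrt (ln (ln x)) \<longrightarrow>
              c * (1 / (2 powr t * sqrt (ln (ln x)))) \<le> Ey (exp (2 ^ h)) (chi (nat (int h + t))) \<and>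
              Ey (exp (2 ^ h)) (chi (nat (int h + t))) \<le> C * (1 / (2 powr t * sqrt (ln (ln x))))))"
proof -
  have "3 / \<epsilon> \<ge> 1" using \<epsilon> by (simp add: field_simps)
  then obtain c C x0 where cC: "c > 0" "C > 0" and asymp: "\<And>x h k. x \<ge> x0 \<Longrightarrow>
          ln x powr \<epsilon> \<le> 2 ^ h \<Longrightarrow> 2 ^ h \<le> ln x powr (1 - \<epsilon>) \<Longrightarrow>
          real k \<le> 3 / \<epsilon> * ln (ln x) \<Longrightarrow>
          c * ((real h * ln 2) ^ k / (2 ^ h * fact k)) \<le> Ey (exp (2 ^ h)) (chi k) \<and>
          Ey (exp (2 ^ h)) (chi k) \<le> C * ((real h * ln 2) ^ k / (2 ^ h * fact k))"
    using Ey_chi_asymp_pow2[OF \<epsilon>, of "3 / \<epsilon>"] by blast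
  define c' where "c' = c * (exp (- 2/\<epsilon> - 3/2) / sqrt 3)"
  define C' where "C' = C * (exp (- 1/2) / sqrt \<epsilon>)"
  have "\<forall>x::real. x \<ge> max x0 (exp (exp (4 / \<epsilon>^2))) \<longrightarrow> (\<forall>(h::nat) (t::int).
          ln x powr \<epsilon> \<le> 2 ^ h \<and> 2 ^ h \<le> ln x powr (1 - \<epsilon>) \<and>
          \<bar>real_of_int t - real h * (ln 4 - 1)\<bar> \<le> sqrt (ln (ln x)) \<longrightarrow>
          c' * (1 / (2 powr t * sqrt (ln (ln x)))) \<le> Ey (exp (2 ^ h)) (chi (nat (int h + t))) \<and>
          Ey (exp (2 ^ h)) (chi (nat (int h + t))) \<le> C' * (1 / (2 powr t * sqrt (ln (ln x)))))"
  proof (intro allI impI)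
    fix x :: real and h :: nat and t :: int
    assume x: "x \<ge> max x0 (exp (exp (4 / \<epsilon>^2)))" and ht: "ln x powr \<epsilon> \<le> 2 ^ h \<and> 2 ^ h \<le> ln x powr (1 - \<epsilon>) \<and>
          \<bar>real_of_int t - real h * (ln 4 - 1)\<bar> \<le> sqrt (ln (ln x))"
    define L where "L = ln (ln x)"
    define k where "k = nat (int h + t)"
    define T where "T = (real h * ln 2) ^ k / (2 ^ h * fact k)"
    define R where "R = 1 / (2 powr t * sqrt L)"
    have L: "4 / \<epsilon>^2 \<le> L" "\<epsilon> * L \<le> real h * ln 2" "real h * ln 2 \<le> L"
      using ln_ln_bounds_of_pow2_range[of \<epsilon> "4 / \<epsilon>^2" x h] \<epsilon> x ht unfolding L_def by auto
    have "\<bar>real_of_int t - real h * (ln 4 - 1)\<bar> \<le> sqrt L" using ht unfolding L_def by simp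
    note shifted = pow_div_fact_at_shifted_index[OF \<epsilon>(1) L this, folded k_def T_def R_def]
    have "real k * \<epsilon> \<le> real k * 1" using \<epsilon> by (intro mult_left_mono) auto
    then have k_upper: "real k \<le> 3 / \<epsilon> * L" using shifted(1) \<epsilon> by (simp add: le_divide_eq)
    have Ey_k: "c * T \<le> Ey (exp (2 ^ h)) (chi k) \<and> Ey (exp (2 ^ h)) (chi k) \<le> C * T"
      using asymp[of x h k] x ht k_upper unfolding L_def T_def by auto
    have "c' * R \<le> c * T"
      unfolding c'_def mult.assoc using shifted(2) cC unfolding T_def R_def by (intro mult_left_mono) auto
    moreover have "C * T \<le> C' * R"
      unfolding C'_def mult.assoc using shifted(3) cC unfolding T_def R_def by (intro mult_left_mono) auto
    ultimately show "c' * (1 / (2 powr t * sqrt (ln (ln x)))) \<le> Ey (exp (2 ^ h)) (chi (nat (int h + t))) \<and>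
          Ey (exp (2 ^ h)) (chi (nat (int h + t))) \<le> C' * (1 / (2 powr t * sqrt (ln (ln x))))"
      using Ey_k unfolding R_def L_def k_def by linarith
  qed
  moreover have "c' > 0" "C' > 0" using cC \<epsilon> by (simp_all add: c'_def C'_def)
  ultimately show ?thesis by blast
qed

theorem lemma3p4:
  fixes \<epsilon> :: real
  assumes "0 < \<epsilon>" and "\<epsilon> < 1/2"
  shows "(\<forall>A::real. A \<ge> 1 \<longrightarrow>
           (\<exists>c C x0. c > 0 \<and> C > 0 \<and> (\<forall>x::real. x \<ge> x0 \<longrightarrow>
              (\<forall>(h::nat) (k::nat).
                 ln x powr \<epsilon> \<le> 2 ^ h \<and> 2 ^ h \<le> ln x powr (1 - \<epsilon>) \<and>
                 ln (ln x) / A \<le> real k \<and> real k \<le> A * ln (ln x) \<longrightarrow>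
                 c * ((real h * ln 2) ^ k / (2 ^ h * fact k)) \<le> Ey (exp (2 ^ h)) (chi k) \<and>
                 Ey (exp (2 ^ h)) (chi k) \<le> C * ((real h * ln 2) ^ k / (2 ^ h * fact k))))))
       \<and>
       (\<exists>c C x0. c > 0 \<and> C > 0 \<and> (\<forall>x::real. x \<ge> x0 \<longrightarrow>
              (\<forall>(h::nat) (t::int).
                 ln x powr \<epsilon> \<le> 2 ^ h \<and> 2 ^ h \<le> ln x powr (1 - \<epsilon>) \<and>
                 \<bar>real_of_int t - real h * (ln 4 - 1)\<bar> \<le> sqrt (ln (ln x)) \<longrightarrow>
                 c * (1 / (2 powr t * sqrt (ln (ln x)))) \<le> Ey (exp (2 ^ h)) (chi (nat (int h + t))) \<and>
                 Ey (exp (2 ^ h)) (chi (nat (int h + t))) \<le> C * (1 / (2 powr t * sqrt (ln (ln x)))))))"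
proof -
  have \<epsilon>: "0 < \<epsilon>" "\<epsilon> \<le> 1" using assms by simp_all
  have "\<exists>c C x0. c > 0 \<and> C > 0 \<and> (\<forall>x::real. x \<ge> x0 \<longrightarrow>
              (\<forall>(h::nat) (k::nat).
                 ln x powr \<epsilon> \<le> 2 ^ h \<and> 2 ^ h \<le> ln x powr (1 - \<epsilon>) \<and>
                 ln (ln x) / A \<le> real k \<and> real k \<le> A * ln (ln x) \<longrightarrow>
                 c * ((real h * ln 2) ^ k / (2 ^ h * fact k)) \<le> Ey (exp (2 ^ h)) (chi k) \<and>
                 Ey (exp (2 ^ h)) (chi k) \<le> C * ((real h * ln 2) ^ k / (2 ^ h * fact k))))"
    if "A \<ge> 1" for A
    using Ey_chi_asymp_pow2[OF \<epsilon> that]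
    by (elim exE conjE) (rule_tac x = c in exI, rule_tac x = C in exI, rule_tac x = x0 in exI, simp)
  then show ?thesis using Ey_chi_shifted_asymp_pow2[OF \<epsilon>] by (intro conjI allI impI) simp_all
qed

end
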